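(* Let $G=(V,E)$ be a finite graph with couplings $J=(J_e)_{e\in E}$, $J_e>0$. Let $\Omega=\{0,1\}^E$, $\Sigma=\{-1,+1\}^V$, and $f:\Omega\to2^\Sigma$, $f(\omega)=\{\sigma\in\Sigma\mid \omega\subset S(\sigma)\}$ (so $|f(\omega)|=2^{\kappa(\omega)}$). Let $A,B\subset V$ with $|A|,|B|$ even, and let $$\rho[\omega]\propto \mathbf{P}^{A\triangle B}_{G,2J}[\omega\mid\mathcal{F}_A]\ (\omega\in\Omega),\qquad \gamma[\sigma]\propto1\ (\sigma\in\Sigma).$$ Let $\mathscr{P}$ be the probability measure on $\Omega\times\Sigma$ with $\mathscr{P}[\omega,\sigma]\propto\rho[\omega]\gamma[\sigma]\mathbf{1}[\sigma\in f(\omega)]$. Then: (a) The marginal of $\mathscr{P}$ on $\Sigma$ is the measure $\mu^{A,B}$ given by $$\mu^{A,B}[\sigma]\propto \langle\tau_{A\triangle B}\rangle_{S(\sigma),2J}\;\mathbf{P}^{A\triangle B}_{S(\sigma),2J}[\mathcal{F}_A]\;\mu^{\mathrm{XOR}}[\sigma].$$ For each $\omega\in\mathcal{F}_A\cap\mathcal{F}_B$, the conditional measure $\mathscr{P}[\cdot\mid\omega]$ on $\Sigma$ is obtained by assigning independent uniform signs $\pm1$ to the open clusters of $\omega$ (all vertices of a cluster receiving the same sign). (b) The marginal of $\mathscr{P}$ on $\Omega$ is the double random current $\mathbf{P}^{A,B}_{G,J}$. For each $\sigma\in\Sigma$ with $\mu^{A,B}[\sigma]\neq0$, the conditional measure $\mathscr{P}[\cdot\mid\sigma]$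 is $\mathbf{P}^{A\triangle B}_{S(\sigma),2J}[\cdot\mid\mathcal{F}_A]$, the single random current on $S(\sigma)$ with sources $A\triangle B$ and couplings $(2J_e)$, conditioned on $\mathcal{F}_A$.
   Context: Configurations $\omega\in\{0,1\}^E$ are identified with their sets of open edges and with spanning subgraphs $(V,\omega)$; $\kappa(\omega)$ is the number of connected components of $(V,\omega)$ (isolated vertices included). For $\sigma\in\{\pm1\}^V$, $S(\sigma)=\{uv\in E\mid \sigma_u=\sigma_v\}$. For $F\subset E$, $\partial F$ is the set of vertices of odd degree in $(V,F)$. For $A\subset V$, $\mathcal{F}_A=\{\omega\subset E\mid \exists F\subset\omega,\ \partial F=A\}$. For a set of edges $H\subset E$ and couplings $K=(K_e)$: the Ising measure on $(V,H)$ is $\mu_{H,K}[\tau]\propto\exp(\sum_{uv\in H}K_{uv}\tau_u\tau_v)$ on $\{\pm1\}^V$, with partition function $Z_{H,K}$, and $\langle\tau_C\rangle_{H,K}$ is the expectation of $\prod_{x\in C}\tau_x$ under it. The single random current $\mathbf{P}^C_{H,K}$ with sources $C$ is the law of $\{e: n_e>0\}\subset E$, where $(n_e)_{e\in H}$ are independent Poisson$(K_e)$ variables ($n_e=0$ for $e\notin H$) conditioned on the set of vertices $v$ with $\sum_{e\ni v}n_e$ odd being $C$. The double random current is $\mathbf{P}^{A,B}_{G,J}=$ law of the union of independent samples of $\mathbf{P}^A_{G,J}$ and $\mathbf{P}^B_{G,J}$ (where $\mathbf{P}^C_{G,J}=\mathbf{P}^C_{E,J}$). $\mu^{\mathrm{XOR}}$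 is the law of the pointwise product $\sigma^1\sigma^2$ of two independent samples of the Ising measure $\mu_{E,J}$ on $G$. *)

theory Defs
  imports "HOL-Analysis.Analysis" "HOL-Library.FuncSet"
begin

text \<open>Graph conventions: a finite vertex set V :: 'v set; edges are two-element
subsets of V (E :: 'v set set); configurations omega are subsets of E;
spin configurations are functions 'v => real, equal to +1 or -1 on V and
(by convention, to make the set of spins finite) equal to 1 outside V.\<close>

definition symdiff :: "'v set \<Rightarrow> 'v set \<Rightarrow> 'v set" where
  "symdiff A B = (A - B) \<union> (B - A)"

definition spins :: "'v set \<Rightarrow> ('v \<Rightarrow> real) set" where
  "spins V = {\<sigma>. (\<forall>v\<in>V. \<sigma> v = 1 \<or> \<sigma> v = -1) \<and> (\<forall>v. v \<notin> V \<longrightarrow> \<sigma> v = 1)}"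

definition agree_edges :: "'v set set \<Rightarrow> ('v \<Rightarrow> real) \<Rightarrow> 'v set set" where
  "agree_edges E \<sigma> = {e\<in>E. \<exists>u v. e = {u, v} \<and> \<sigma> u = \<sigma> v}"

definition bdry :: "'v set \<Rightarrow> 'v set set \<Rightarrow> 'v set" where
  "bdry V F = {v\<in>V. odd (card {e\<in>F. v \<in> e})}"

definition FA :: "'v set \<Rightarrow> 'v set set \<Rightarrow> 'v set \<Rightarrow> 'v set set set" where
  "FA V E A = {\<omega>. \<omega> \<subseteq> E \<and> (\<exists>F\<subseteq>\<omega>. bdry V F = A)}"

definition conn :: "'v set \<Rightarrow> 'v set set \<Rightarrow> ('v \<times> 'v) set" where
  "conn V \<omega> = ({(u, v). {u, v} \<in> \<omega>})\<^sup>* \<inter> (V \<times> V)"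

definition clusters :: "'v set \<Rightarrow> 'v set set \<Rightarrow> 'v set set" where
  "clusters V \<omega> = V // conn V \<omega>"

definition kappa :: "'v set \<Rightarrow> 'v set set \<Rightarrow> nat" where
  "kappa V \<omega> = card (clusters V \<omega>)"

definition fmap :: "'v set \<Rightarrow> 'v set set \<Rightarrow> 'v set set \<Rightarrow> ('v \<Rightarrow> real) set" where
  "fmap V E \<omega> = {\<sigma>\<in>spins V. \<omega> \<subseteq> agree_edges E \<sigma>}"

definition ising_weight :: "'v set set \<Rightarrow> ('v set \<Rightarrow> real) \<Rightarrow> ('v \<Rightarrow> real) \<Rightarrow> real" where
  "ising_weight H K \<tau> = exp (\<Sum>e\<in>H. K e * (\<Prod>x\<in>e. \<tau> x))"

definition ising_Z :: "'v set \<Rightarrow> 'v set set \<Rightarrow> ('v set \<Rightarrow> real) \<Rightarrow> real" where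
  "ising_Z V H K = (\<Sum>\<tau>\<in>spins V. ising_weight H K \<tau>)"

definition ising_mu :: "'v set \<Rightarrow> 'v set set \<Rightarrow> ('v set \<Rightarrow> real) \<Rightarrow> ('v \<Rightarrow> real) \<Rightarrow> real" where
  "ising_mu V H K \<tau> = ising_weight H K \<tau> / ising_Z V H K"

definition ising_corr :: "'v set \<Rightarrow> 'v set set \<Rightarrow> ('v set \<Rightarrow> real) \<Rightarrow> 'v set \<Rightarrow> real" where
  "ising_corr V H K C = (\<Sum>\<tau>\<in>spins V. (\<Prod>x\<in>C. \<tau> x) * ising_mu V H K \<tau>)"

definition mu_xor :: "'v set \<Rightarrow> 'v set set \<Rightarrow> ('v set \<Rightarrow> real) \<Rightarrow> ('v \<Rightarrow> real) \<Rightarrow> real" where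
  "mu_xor V E J \<sigma> = (\<Sum>p\<in>{p\<in>spins V \<times> spins V. (\<lambda>v. fst p v * snd p v) = \<sigma>}.
                        ising_mu V E J (fst p) * ising_mu V E J (snd p))"

definition currents :: "'v set \<Rightarrow> 'v set set \<Rightarrow> 'v set \<Rightarrow> ('v set \<Rightarrow> nat) set" where
  "currents V H C = {n. (\<forall>e. e \<notin> H \<longrightarrow> n e = 0) \<and>
                         {v\<in>V. odd (\<Sum>e\<in>{e\<in>H. v \<in> e}. n e)} = C}"

definition poisson_weight :: "'v set set \<Rightarrow> ('v set \<Rightarrow> real) \<Rightarrow> ('v set \<Rightarrow> nat) \<Rightarrow> real" where
  "poisson_weight H K n = (\<Prod>e\<in>H. exp (- K e) * K e ^ n e / fact (n e))"

definition rc_prob :: "'v set \<Rightarrow> 'v set set \<Rightarrow> ('v set \<Rightarrow> real) \<Rightarrow> 'v set \<Rightarrow> 'v set set \<Rightarrow> real" where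
  "rc_prob V H K C \<omega> =
     (\<Sum>\<^sub>\<infinity>n\<in>{n\<in>currents V H C. {e. n e > 0} = \<omega>}. poisson_weight H K n)
     / (\<Sum>\<^sub>\<infinity>n\<in>currents V H C. poisson_weight H K n)"

definition rc_event :: "'v set \<Rightarrow> 'v set set \<Rightarrow> 'v set set \<Rightarrow> ('v set \<Rightarrow> real) \<Rightarrow> 'v set
                         \<Rightarrow> 'v set set set \<Rightarrow> real" where
  "rc_event V E H K C X = (\<Sum>\<omega>\<in>Pow E \<inter> X. rc_prob V H K C \<omega>)"

definition rc_cond :: "'v set \<Rightarrow> 'v set set \<Rightarrow> 'v set set \<Rightarrow> ('v set \<Rightarrow> real) \<Rightarrow> 'v set
                         \<Rightarrow> 'v set set set \<Rightarrow> 'v set set \<Rightarrow> real" where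
  "rc_cond V E H K C X \<omega> =
     (if \<omega> \<in> X then rc_prob V H K C \<omega> else 0) / rc_event V E H K C X"

definition drc_prob :: "'v set \<Rightarrow> 'v set set \<Rightarrow> ('v set \<Rightarrow> real) \<Rightarrow> 'v set \<Rightarrow> 'v set
                         \<Rightarrow> 'v set set \<Rightarrow> real" where
  "drc_prob V E J A B \<omega> =
     (\<Sum>p\<in>{p\<in>Pow E \<times> Pow E. fst p \<union> snd p = \<omega>}.
        rc_prob V E J A (fst p) * rc_prob V E J B (snd p))"

definition muAB_weight :: "'v set \<Rightarrow> 'v set set \<Rightarrow> ('v set \<Rightarrow> real) \<Rightarrow> 'v set \<Rightarrow> 'v set
                         \<Rightarrow> ('v \<Rightarrow> real) \<Rightarrow> real" where
  "muAB_weight V E J A B \<sigma> =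
     ising_corr V (agree_edges E \<sigma>) (\<lambda>e. 2 * J e) (symdiff A B)
     * rc_event V E (agree_edges E \<sigma>) (\<lambda>e. 2 * J e) (symdiff A B) (FA V E A)
     * mu_xor V E J \<sigma>"

definition muAB :: "'v set \<Rightarrow> 'v set set \<Rightarrow> ('v set \<Rightarrow> real) \<Rightarrow> 'v set \<Rightarrow> 'v set
                         \<Rightarrow> ('v \<Rightarrow> real) \<Rightarrow> real" where
  "muAB V E J A B \<sigma> = muAB_weight V E J A B \<sigma> / (\<Sum>\<sigma>'\<in>spins V. muAB_weight V E J A B \<sigma>')"

definition rho :: "'v set \<Rightarrow> 'v set set \<Rightarrow> ('v set \<Rightarrow> real) \<Rightarrow> 'v set \<Rightarrow> 'v set
                         \<Rightarrow> 'v set set \<Rightarrow> real" where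
  "rho V E J A B \<omega> =
     rc_cond V E E (\<lambda>e. 2 * J e) (symdiff A B) (FA V E A) \<omega>
     / (\<Sum>\<omega>'\<in>Pow E. rc_cond V E E (\<lambda>e. 2 * J e) (symdiff A B) (FA V E A) \<omega>')"

definition gamma_unif :: "'v set \<Rightarrow> ('v \<Rightarrow> real) \<Rightarrow> real" where
  "gamma_unif V \<sigma> = 1 / real (card (spins V))"

definition coupling_weight :: "'v set \<Rightarrow> 'v set set \<Rightarrow> ('v set \<Rightarrow> real) \<Rightarrow> 'v set \<Rightarrow> 'v set
                         \<Rightarrow> 'v set set \<Rightarrow> ('v \<Rightarrow> real) \<Rightarrow> real" where
  "coupling_weight V E J A B \<omega> \<sigma> =
     rho V E J A B \<omega> * gamma_unif V \<sigma> * (if \<sigma> \<in> fmap V E \<omega> then 1 else 0)"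

definition coupling :: "'v set \<Rightarrow> 'v set set \<Rightarrow> ('v set \<Rightarrow> real) \<Rightarrow> 'v set \<Rightarrow> 'v set
                         \<Rightarrow> 'v set set \<Rightarrow> ('v \<Rightarrow> real) \<Rightarrow> real" where
  "coupling V E J A B \<omega> \<sigma> = coupling_weight V E J A B \<omega> \<sigma>
     / (\<Sum>p\<in>Pow E \<times> spins V. coupling_weight V E J A B (fst p) (snd p))"

definition spread :: "'v set \<Rightarrow> 'v set set \<Rightarrow> ('v set \<Rightarrow> real) \<Rightarrow> 'v \<Rightarrow> real" where
  "spread V \<omega> s v = (if v \<in> V then s (conn V \<omega> `` {v}) else 1)"

definition cluster_sign_law :: "'v set \<Rightarrow> 'v set set \<Rightarrow> ('v \<Rightarrow> real) \<Rightarrow> real" where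
  "cluster_sign_law V \<omega> \<sigma> =
     real (card {s \<in> clusters V \<omega> \<rightarrow>\<^sub>E {-1, 1}. spread V \<omega> s = \<sigma>})
     / real (card (clusters V \<omega> \<rightarrow>\<^sub>E ({-1, 1} :: real set)))"

end

theory Submission
  imports Defs
begin

text \<open>Writing exp (K t) = cosh K + t sinh K for t = \<plusminus>1 expands an Ising weight into a sum over
  edge sets F of products of spins over the boundary of F, and the Poisson weights of all
  currents with trace \<omega> and set of odd edges F sum to the product of sinh K over F and of
  cosh K - 1 over \<omega> - F. The double current is then computed edge by edge: by
  sinh 2x = 2 sinh x cosh x and cosh 2x - 1 = 2 (sinh x)^2, the pairs of traces with union \<omega>
  contribute 2^-|\<omega>| times the trace weight of \<omega> with couplings 2J and sources symdiff A B,
  times the number of F \<subseteq> \<omega> with boundary A; a character sum over the spins shows that this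
  number is 2^|\<omega>| |f(\<omega>)| / 2^|V| when \<omega> \<in> F_A. So the coupling is proportional to
  [\<omega> \<in> F_A] w(\<omega>) [\<sigma> \<in> f(\<omega>)] with w the trace weight, and its marginals and conditionals are
  resummations of this weight. On the spin side, multiplying the Ising weights of \<tau> and \<tau>\<sigma>
  doubles the couplings on S(\<sigma>) and cancels the others, and the same expansion writes the
  correlation of symdiff A B on S(\<sigma>) as a ratio of current partition functions, so that all
  normalisations cancel in \<mu>^{A,B}. Finally, f(\<omega>) is in bijection with the sign assignments
  to the clusters of \<omega>.\<close>


section \<open>Series\<close>

lemma has_sum_prod_PiE_nonneg:
  fixes f :: "'a \<Rightarrow> 'b \<Rightarrow> real"
  assumes "finite A"
    and "\<And>x. x \<in> A \<Longrightarrow> (f x has_sum s x) (B x)"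
    and "\<And>x y. x \<in> A \<Longrightarrow> y \<in> B x \<Longrightarrow> f x y \<ge> 0"
  shows "((\<lambda>g. \<Prod>x\<in>A. f x (g x)) has_sum (\<Prod>x\<in>A. s x)) (PiE A B)"
  using assms
proof (induction A rule: finite_induct)
  case empty
  then show ?case by (simp add: has_sum_finite_iff)
next
  case (insert x F)
  let ?h = "\<lambda>(y, g). f x y * (\<Prod>z\<in>F. f z (g z))"
  have IH: "((\<lambda>g. \<Prod>z\<in>F. f z (g z)) has_sum (\<Prod>z\<in>F. s z)) (PiE F B)"
    using insert by auto
  have row: "((\<lambda>g. f x y * (\<Prod>z\<in>F. f z (g z))) has_sum (f x y * (\<Prod>z\<in>F. s z))) (PiE F B)" for y
    using has_sum_cmult_right[OF IH] by simp
  have col: "((\<lambda>y. f x y * (\<Prod>z\<in>F. s z)) has_sum (s x * (\<Prod>z\<in>F. s z))) (B x)"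
    using has_sum_cmult_left[OF insert.prems(1)[of x]] by simp
  have "0 \<le> ?h (y, g)" if "y \<in> B x" "g \<in> PiE F B" for y g
    using insert.prems(2) that by (auto intro!: mult_nonneg_nonneg prod_nonneg)
  then have "?h summable_on Sigma (B x) (\<lambda>_. PiE F B)"
    using row col by (intro summable_on_SigmaI) (auto simp: summable_on_def)
  then have "(?h has_sum (s x * (\<Prod>z\<in>F. s z))) (B x \<times> PiE F B)"
    using row col by (intro has_sum_SigmaI) auto
  moreover have "(\<Prod>z\<in>F. f z ((g(x := y)) z)) = (\<Prod>z\<in>F. f z (g z))" for g y
    using insert.hyps by (intro prod.cong) auto
  then have "?h = (\<lambda>p. (\<lambda>g. \<Prod>z\<in>insert x F. f z (g z)) ((\<lambda>(y, g). g(x := y)) p))"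
    using insert.hyps by (auto simp: fun_eq_iff)
  moreover have "bij_betw (\<lambda>(y, g). g(x := y)) (B x \<times> PiE F B) (PiE (insert x F) B)"
    unfolding bij_betw_def using inj_combinator[of x F B] insert.hyps by (simp add: PiE_insert_eq)
  ultimately have "((\<lambda>g. \<Prod>z\<in>insert x F. f z (g z)) has_sum (s x * (\<Prod>z\<in>F. s z)))
      (PiE (insert x F) B)"
    using has_sum_reindex_bij_betw by fastforce
  then show ?case
    using insert.hyps by simp
qed

lemma sinh_has_sum_odd:
  assumes "(x::real) \<ge> 0"
  shows "((\<lambda>n. x ^ n / fact n) has_sum sinh x) {n. odd n}"
proof -
  have "((\<lambda>n. if even n then 0 else x ^ n /\<^sub>R fact n) has_sum sinh x) UNIV"
    by (rule sums_nonneg_imp_has_sum[OF sinh_converges]) (use assms in auto)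
  then show ?thesis
    by (rule has_sum_cong_neutral[THEN iffD1, rotated -1]) (auto simp: divide_inverse_commute)
qed

lemma cosh_minus_1_has_sum_even_pos:
  assumes "(x::real) \<ge> 0"
  shows "((\<lambda>n. x ^ n / fact n) has_sum (cosh x - 1)) {n. even n \<and> n > 0}"
proof -
  have "(\<lambda>n. (if even n then x ^ n /\<^sub>R fact n else 0) - (if n = 0 then 1 else 0)) sums (cosh x - 1)"
    using sums_diff[OF cosh_converges sums_single[of 0 "\<lambda>_. 1::real"]] by simp
  then have "((\<lambda>n. (if even n then x ^ n /\<^sub>R fact n else 0) - (if n = 0 then 1 else 0))
      has_sum (cosh x - 1)) UNIV"
    by (rule sums_nonneg_imp_has_sum) (use assms in auto)
  then show ?thesis
    by (rule has_sum_cong_neutral[THEN iffD1, rotated -1]) (auto simp: divide_inverse_commute)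
qed

section \<open>Spin configurations and boundaries\<close>

lemma spins_values: "\<sigma> \<in> spins V \<Longrightarrow> \<sigma> x = 1 \<or> \<sigma> x = -1"
  unfolding spins_def by (cases "x \<in> V") auto

lemma spins_mult_self: "\<sigma> \<in> spins V \<Longrightarrow> \<sigma> x * \<sigma> x = 1"
  using spins_values[of \<sigma> V x] by auto

lemma finite_spins: "finite V \<Longrightarrow> finite (spins V)"
  by (rule finite_subset[OF _ finite_set_of_finite_funs[of V "{1, -1}" 1]])
     (auto simp: spins_def)

lemma const_1_in_spins: "(\<lambda>_. 1) \<in> spins V"
  unfolding spins_def by auto

lemma card_spins_pos: "finite V \<Longrightarrow> card (spins V) > 0"
  using const_1_in_spins[of V] finite_spins[of V] by (auto simp: card_gt_0_iff)

lemma sum_spins_prod: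
  assumes "finite V" "D \<subseteq> V"
  shows "(\<Sum>\<sigma>\<in>spins V. \<Prod>x\<in>D. \<sigma> x) = (if D = {} then real (card (spins V)) else 0)"
proof (cases "D = {}")
  case False
  then obtain d where d: "d \<in> D" by auto
  have fD: "finite D" using assms finite_subset by blast
  define flip where "flip \<sigma> = \<sigma>(d := - \<sigma> d)" for \<sigma> :: "'a \<Rightarrow> real"
  have "flip \<sigma> \<in> spins V" if "\<sigma> \<in> spins V" for \<sigma>
    using that d assms(2) unfolding flip_def spins_def by auto
  moreover have "flip (flip \<sigma>) = \<sigma>" for \<sigma> unfolding flip_def by auto
  ultimately have bij: "bij_betw flip (spins V) (spins V)"
    by (intro bij_betwI[where g = flip]) auto
  have "(\<Prod>x\<in>D - {d}. flip \<sigma> x) = (\<Prod>x\<in>D - {d}. \<sigma> x)" for \<sigma>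
    unfolding flip_def by (intro prod.cong) auto
  then have "(\<Prod>x\<in>D. flip \<sigma> x) = - (\<Prod>x\<in>D. \<sigma> x)" for \<sigma>
    using prod.remove[OF fD d, of "flip \<sigma>"] prod.remove[OF fD d, of \<sigma>] by (simp add: flip_def)
  then have "(\<Sum>\<sigma>\<in>spins V. \<Prod>x\<in>D. \<sigma> x) = - (\<Sum>\<sigma>\<in>spins V. \<Prod>x\<in>D. \<sigma> x)"
    using sum.reindex_bij_betw[OF bij, of "\<lambda>\<sigma>. \<Prod>x\<in>D. \<sigma> x"] by (simp add: sum_negf)
  then show ?thesis using False by simp
qed simp

lemma prod_spins_symdiff:
  assumes "\<sigma> \<in> spins V" "finite C" "finite D"
  shows "(\<Prod>x\<in>C. \<sigma> x) * (\<Prod>x\<in>D. \<sigma> x) = (\<Prod>x\<in>symdiff C D. \<sigma> x)"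
proof -
  have "(\<Prod>x\<in>C. \<sigma> x) * (\<Prod>x\<in>D. \<sigma> x)
      = (\<Prod>x\<in>C - D. \<sigma> x) * (\<Prod>x\<in>D - C. \<sigma> x) * (\<Prod>x\<in>C \<inter> D. \<sigma> x * \<sigma> x)"
    unfolding prod.Int_Diff[OF assms(2), of \<sigma> D] prod.Int_Diff[OF assms(3), of \<sigma> C]
    by (simp add: prod.distrib Int_commute ac_simps)
  also have "\<dots> = (\<Prod>x\<in>C - D. \<sigma> x) * (\<Prod>x\<in>D - C. \<sigma> x)"
    using assms(1) by (simp add: spins_mult_self)
  also have "\<dots> = (\<Prod>x\<in>symdiff C D. \<sigma> x)"
    unfolding symdiff_def by (rule prod.union_disjoint[symmetric]) (use assms in auto)
  finally show ?thesis .
qed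

lemma bij_betw_spins_product:
  assumes "\<sigma> \<in> spins V"
  shows "bij_betw (\<lambda>\<tau>. (\<tau>, \<lambda>v. \<tau> v * \<sigma> v)) (spins V)
           {p\<in>spins V \<times> spins V. (\<lambda>v. fst p v * snd p v) = \<sigma>}"
proof (rule bij_betwI[where g = fst])
  have cancel: "\<tau> v * (\<tau> v * x) = x" if "\<tau> \<in> spins V" for \<tau> v x
    using spins_mult_self[OF that, of v] by (simp add: mult.assoc[symmetric])
  show "(\<lambda>\<tau>. (\<tau>, \<lambda>v. \<tau> v * \<sigma> v)) \<in> spins V \<rightarrow> {p\<in>spins V \<times> spins V. (\<lambda>v. fst p v * snd p v) = \<sigma>}"
  proof
    fix \<tau> assume \<tau>: "\<tau> \<in> spins V"
    have "(\<lambda>v. \<tau> v * \<sigma> v) \<in> spins V"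
      using spins_values[OF \<tau>] spins_values[OF assms] \<tau> assms unfolding spins_def by fastforce
    then show "(\<tau>, \<lambda>v. \<tau> v * \<sigma> v) \<in> {p\<in>spins V \<times> spins V. (\<lambda>v. fst p v * snd p v) = \<sigma>}"
      using \<tau> by (simp add: cancel)
  qed
  show "(fst p, \<lambda>v. fst p v * \<sigma> v) = p" if "p \<in> {p\<in>spins V \<times> spins V. (\<lambda>v. fst p v * snd p v) = \<sigma>}" for p
    using that by (auto simp: cancel)
qed auto

lemma ising_Z_pos: "finite V \<Longrightarrow> ising_Z V H K > 0"
  unfolding ising_Z_def ising_weight_def
  using finite_spins const_1_in_spins by (intro sum_pos) auto

lemma symdiff_cancel_left: "symdiff F (symdiff F X) = X"
  unfolding symdiff_def by auto

lemma symdiff_eq_empty_iff: "symdiff C D = {} \<longleftrightarrow> C = D"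
  unfolding symdiff_def by auto

lemma odd_card_symdiff_iff:
  assumes "finite X" "finite Y"
  shows "odd (card (symdiff X Y)) \<longleftrightarrow> odd (card X) \<noteq> odd (card Y)"
proof -
  have "card (symdiff X Y) = card (X - Y) + card (Y - X)"
    unfolding symdiff_def using assms by (intro card_Un_disjoint) auto
  moreover have "card X = card (X - Y) + card (X \<inter> Y)" "card Y = card (Y - X) + card (X \<inter> Y)"
    using card_Int_Diff[OF assms(1), of Y] card_Int_Diff[OF assms(2), of X]
    by (simp_all add: Int_commute)
  ultimately show ?thesis by auto
qed

lemma bdry_subset: "bdry V F \<subseteq> V"
  unfolding bdry_def by auto

lemma bdry_symdiff:
  assumes "finite F1" "finite F2"
  shows "bdry V (symdiff F1 F2) = symdiff (bdry V F1) (bdry V F2)"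
proof -
  have "{e\<in>symdiff F1 F2. v \<in> e} = symdiff {e\<in>F1. v \<in> e} {e\<in>F2. v \<in> e}" for v
    unfolding symdiff_def by auto
  then have "odd (card {e\<in>symdiff F1 F2. v \<in> e}) \<longleftrightarrow>
      odd (card {e\<in>F1. v \<in> e}) \<noteq> odd (card {e\<in>F2. v \<in> e})" for v
    using assms by (simp add: odd_card_symdiff_iff)
  then show ?thesis
    unfolding bdry_def symdiff_def by blast
qed

lemma bij_betw_symdiff_bdry:
  assumes "finite \<omega>" "F0 \<subseteq> \<omega>" "bdry V F0 = A"
  shows "bij_betw (symdiff F0) {F\<in>Pow \<omega>. bdry V F = B} {F\<in>Pow \<omega>. bdry V F = symdiff A B}"
proof (rule bij_betwI[where g = "symdiff F0"])
  have bdry: "bdry V (symdiff F0 F) = symdiff A (bdry V F)" if "F \<subseteq> \<omega>" for F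
    using assms that bdry_symdiff[of F0 F V] finite_subset by blast
  show "symdiff F0 \<in> {F\<in>Pow \<omega>. bdry V F = B} \<rightarrow> {F\<in>Pow \<omega>. bdry V F = symdiff A B}"
    using assms(2) by (auto simp: bdry) (auto simp: symdiff_def)
  show "symdiff F0 \<in> {F\<in>Pow \<omega>. bdry V F = symdiff A B} \<rightarrow> {F\<in>Pow \<omega>. bdry V F = B}"
    using assms(2) by (auto simp: bdry symdiff_cancel_left) (auto simp: symdiff_def)
qed (auto simp: symdiff_cancel_left)

section \<open>Random currents\<close>

text \<open>Up to the factor \<Prod>e\<in>H. exp (- K e), \<open>trace_parity_weight K \<omega> F\<close> is the total Poisson
  weight of the currents that are positive exactly on \<omega> and odd exactly on F
  (\<open>has_sum_poisson_weight_parity\<close>); \<open>trace_weight\<close> collects the F with boundary C.\<close>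

definition trace_parity_weight :: "('e \<Rightarrow> real) \<Rightarrow> 'e set \<Rightarrow> 'e set \<Rightarrow> real" where
  "trace_parity_weight K \<omega> F = (\<Prod>e\<in>F. sinh (K e)) * (\<Prod>e\<in>\<omega> - F. cosh (K e) - 1)"

definition trace_weight :: "'v set \<Rightarrow> ('v set \<Rightarrow> real) \<Rightarrow> 'v set \<Rightarrow> 'v set set \<Rightarrow> real" where
  "trace_weight V K C \<omega> = (\<Sum>F\<in>{F\<in>Pow \<omega>. bdry V F = C}. trace_parity_weight K \<omega> F)"

definition current_partition :: "'v set \<Rightarrow> 'v set set \<Rightarrow> ('v set \<Rightarrow> real) \<Rightarrow> 'v set \<Rightarrow> real" where
  "current_partition V H K C =
     (\<Sum>F\<in>{F\<in>Pow H. bdry V F = C}. (\<Prod>e\<in>F. sinh (K e)) * (\<Prod>e\<in>H - F. cosh (K e)))"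

lemma trace_parity_weight_nonneg:
  "(\<And>e. e \<in> \<omega> \<Longrightarrow> K e \<ge> 0) \<Longrightarrow> F \<subseteq> \<omega> \<Longrightarrow> trace_parity_weight K \<omega> F \<ge> 0"
  unfolding trace_parity_weight_def
  by (intro mult_nonneg_nonneg prod_nonneg) (auto simp: cosh_real_ge_1)

lemma trace_weight_nonneg:
  "(\<And>e. e \<in> \<omega> \<Longrightarrow> K e \<ge> 0) \<Longrightarrow> trace_weight V K C \<omega> \<ge> 0"
  unfolding trace_weight_def by (intro sum_nonneg trace_parity_weight_nonneg) auto

lemma current_sources_eq_bdry:
  assumes "finite H" "\<omega> \<subseteq> H" "\<And>e. e \<notin> \<omega> \<Longrightarrow> n e = 0"
  shows "{v\<in>V. odd (\<Sum>e\<in>{e\<in>H. v \<in> e}. n e)} = bdry V {e\<in>\<omega>. odd (n e)}"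
proof -
  have "{e\<in>{e\<in>H. v \<in> e}. odd (n e)} = {e\<in>{e\<in>\<omega>. odd (n e)}. v \<in> e}" for v
    using assms by fastforce
  then show ?thesis
    unfolding bdry_def using assms(1) by (simp add: even_sum_iff)
qed

lemma currents_with_trace_iff:
  assumes "finite H" "\<omega> \<subseteq> H"
  shows "n \<in> currents V H C \<and> {e. n e > 0} = \<omega> \<longleftrightarrow>
      {e. n e > 0} = \<omega> \<and> bdry V {e\<in>\<omega>. odd (n e)} = C"
proof (cases "{e. n e > 0} = \<omega>")
  case True
  then have "{v\<in>V. odd (\<Sum>e\<in>{e\<in>H. v \<in> e}. n e)} = bdry V {e\<in>\<omega>. odd (n e)}"
    using assms by (intro current_sources_eq_bdry) auto
  moreover have "\<forall>e. e \<notin> H \<longrightarrow> n e = 0"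
    using True assms(2) by auto
  ultimately show ?thesis
    using True by (simp add: currents_def)
qed simp

lemma has_sum_poisson_weight_parity:
  fixes K :: "'v set \<Rightarrow> real"
  assumes "finite H" "\<omega> \<subseteq> H" "F \<subseteq> \<omega>" "\<And>e. e \<in> \<omega> \<Longrightarrow> K e \<ge> 0"
  shows "(poisson_weight H K has_sum ((\<Prod>e\<in>H. exp (- K e)) * trace_parity_weight K \<omega> F))
           {n. (\<forall>e. e \<notin> \<omega> \<longrightarrow> n e = 0) \<and> (\<forall>e\<in>\<omega>. n e > 0 \<and> (odd (n e) \<longleftrightarrow> e \<in> F))}"
    (is "(_ has_sum _) ?M")
proof -
  have fin: "finite \<omega>" using assms finite_subset by blast
  define D where "D e = (if e \<in> F then {n::nat. odd n} else {n. even n \<and> n > 0})" for e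
  define s where "s e = (if e \<in> F then sinh (K e) else cosh (K e) - 1)" for e
  define ext where "ext p e = (if e \<in> \<omega> then p e else 0)" for p :: "'v set \<Rightarrow> nat" and e
  have bij: "bij_betw ext (PiE \<omega> D) ?M"
  proof (rule bij_betwI[where g = "\<lambda>n. restrict n \<omega>"])
    show "ext \<in> PiE \<omega> D \<rightarrow> ?M"
      by (auto simp: ext_def D_def PiE_iff split: if_splits) (metis odd_pos)
    show "(\<lambda>n. restrict n \<omega>) \<in> ?M \<rightarrow> PiE \<omega> D"
      by (auto simp: D_def)
  qed (auto simp: ext_def fun_eq_iff PiE_iff extensional_def)
  have "((\<lambda>n. K e ^ n / fact n) has_sum s e) (D e)" if "e \<in> \<omega>" for e
    unfolding s_def D_def
    using sinh_has_sum_odd cosh_minus_1_has_sum_even_pos assms(4)[OF that] by auto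
  then have "((\<lambda>p. \<Prod>e\<in>\<omega>. K e ^ p e / fact (p e)) has_sum (\<Prod>e\<in>\<omega>. s e)) (PiE \<omega> D)"
    using fin assms(4) by (intro has_sum_prod_PiE_nonneg) auto
  then have "((\<lambda>p. (\<Prod>e\<in>H. exp (- K e)) * (\<Prod>e\<in>\<omega>. K e ^ p e / fact (p e))) has_sum
      ((\<Prod>e\<in>H. exp (- K e)) * (\<Prod>e\<in>\<omega>. s e))) (PiE \<omega> D)"
    by (rule has_sum_cmult_right)
  moreover have "poisson_weight H K (ext p) = (\<Prod>e\<in>H. exp (- K e)) * (\<Prod>e\<in>\<omega>. K e ^ p e / fact (p e))"
    for p
  proof -
    have "(\<Prod>e\<in>H. K e ^ ext p e / fact (ext p e)) = (\<Prod>e\<in>\<omega>. K e ^ p e / fact (p e))"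
      using assms(1,2) by (subst prod.mono_neutral_right[of H \<omega>]) (auto simp: ext_def)
    then show ?thesis
      unfolding poisson_weight_def times_divide_eq_right[symmetric] prod.distrib by simp
  qed
  moreover have "(\<Prod>e\<in>\<omega>. s e) = trace_parity_weight K \<omega> F"
    unfolding s_def trace_parity_weight_def prod.If_cases[OF fin]
    using assms(3) by (simp add: Int_absorb1 Diff_eq)
  ultimately show ?thesis
    using has_sum_reindex_bij_betw[OF bij, of "poisson_weight H K"] by simp
qed

lemma has_sum_poisson_weight_trace:
  fixes K :: "'v set \<Rightarrow> real"
  assumes "finite H" "\<omega> \<subseteq> H" "\<And>e. e \<in> \<omega> \<Longrightarrow> K e \<ge> 0"
  shows "(poisson_weight H K has_sum ((\<Prod>e\<in>H. exp (- K e)) * trace_weight V K C \<omega>))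
           {n\<in>currents V H C. {e. n e > 0} = \<omega>}"
proof -
  have fin: "finite \<omega>" using assms finite_subset by blast
  define M where "M F = {n :: 'v set \<Rightarrow> nat. (\<forall>e. e \<notin> \<omega> \<longrightarrow> n e = 0) \<and>
                           (\<forall>e\<in>\<omega>. n e > 0 \<and> (odd (n e) \<longleftrightarrow> e \<in> F))}" for F
  let ?A = "{F\<in>Pow \<omega>. bdry V F = C}"
  have M_iff: "n \<in> M F \<longleftrightarrow> {e. n e > 0} = \<omega> \<and> F = {e\<in>\<omega>. odd (n e)}" if "F \<subseteq> \<omega>" for n F
    using that unfolding M_def mem_Collect_eq by (auto simp: set_eq_iff)
  have pieces: "(poisson_weight H K has_sum (\<Sum>F\<in>?A. (\<Prod>e\<in>H. exp (- K e)) * trace_parity_weight K \<omega> F))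
      (\<Union>F\<in>?A. M F)"
  proof (rule sum_has_sum)
    show "(poisson_weight H K has_sum ((\<Prod>e\<in>H. exp (- K e)) * trace_parity_weight K \<omega> F)) (M F)"
      if "F \<in> ?A" for F
      unfolding M_def using that by (intro has_sum_poisson_weight_parity[OF assms(1,2) _ assms(3)]) auto
    show "M F \<inter> M F' = {}" if "F \<in> ?A" "F' \<in> ?A" "F \<noteq> F'" for F F'
      using that(3) M_iff[of F] M_iff[of F'] that(1,2) by auto
  qed (use fin in simp)
  have "n \<in> (\<Union>F\<in>?A. M F) \<longleftrightarrow> {e. n e > 0} = \<omega> \<and> bdry V {e\<in>\<omega>. odd (n e)} = C" for n
  proof
    assume "n \<in> (\<Union>F\<in>?A. M F)"
    then obtain F where "F \<in> ?A" "n \<in> M F" by blast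
    then show "{e. n e > 0} = \<omega> \<and> bdry V {e\<in>\<omega>. odd (n e)} = C"
      using M_iff[of F n] by auto
  next
    assume *: "{e. n e > 0} = \<omega> \<and> bdry V {e\<in>\<omega>. odd (n e)} = C"
    then have "n \<in> M {e\<in>\<omega>. odd (n e)}"
      using M_iff[of "{e\<in>\<omega>. odd (n e)}" n] by auto
    with * show "n \<in> (\<Union>F\<in>?A. M F)" by (intro UN_I[of "{e\<in>\<omega>. odd (n e)}"]) auto
  qed
  moreover note currents_with_trace_iff[OF assms(1,2)]
  ultimately have "(\<Union>F\<in>?A. M F) = {n\<in>currents V H C. {e. n e > 0} = \<omega>}"
    by (intro set_eqI) (simp only: mem_Collect_eq)
  with pieces show ?thesis
    unfolding trace_weight_def sum_distrib_left by simp
qed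

lemma sum_trace_parity_weight_supersets:
  assumes "finite H" "F \<subseteq> H"
  shows "(\<Sum>\<omega>\<in>{\<omega>\<in>Pow H. F \<subseteq> \<omega>}. trace_parity_weight K \<omega> F)
       = (\<Prod>e\<in>F. sinh (K e)) * (\<Prod>e\<in>H - F. cosh (K e))"
proof -
  have "bij_betw (\<lambda>X. F \<union> X) (Pow (H - F)) {\<omega>\<in>Pow H. F \<subseteq> \<omega>}"
    by (rule bij_betwI[where g = "\<lambda>\<omega>. \<omega> - F"]) (use assms in auto)
  then have "(\<Sum>\<omega>\<in>{\<omega>\<in>Pow H. F \<subseteq> \<omega>}. trace_parity_weight K \<omega> F)
      = (\<Sum>X\<in>Pow (H - F). trace_parity_weight K (F \<union> X) F)"
    by (rule sum.reindex_bij_betw[symmetric])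
  also have "\<dots> = (\<Sum>X\<in>Pow (H - F). (\<Prod>e\<in>F. sinh (K e)) *
      ((\<Prod>e\<in>X. cosh (K e) - 1) * (\<Prod>e\<in>H - F - X. 1)))"
  proof (rule sum.cong[OF refl])
    fix X assume "X \<in> Pow (H - F)"
    then have "F \<union> X - F = X" by blast
    then show "trace_parity_weight K (F \<union> X) F
        = (\<Prod>e\<in>F. sinh (K e)) * ((\<Prod>e\<in>X. cosh (K e) - 1) * (\<Prod>e\<in>H - F - X. 1))"
      unfolding trace_parity_weight_def by simp
  qed
  also have "\<dots> = (\<Prod>e\<in>F. sinh (K e)) * (\<Prod>e\<in>H - F. (cosh (K e) - 1) + 1)"
    unfolding sum_distrib_left[symmetric] prod_add[OF finite_Diff[OF assms(1)]] ..
  finally show ?thesis by simp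
qed

lemma sum_trace_weight:
  assumes "finite H"
  shows "(\<Sum>\<omega>\<in>Pow H. trace_weight V K C \<omega>) = current_partition V H K C"
proof -
  have "(\<Sum>\<omega>\<in>Pow H. trace_weight V K C \<omega>)
      = (\<Sum>\<omega>\<in>Pow H. \<Sum>F\<in>{F\<in>Pow H. F \<subseteq> \<omega> \<and> bdry V F = C}. trace_parity_weight K \<omega> F)"
    unfolding trace_weight_def by (intro sum.cong refl arg_cong[where f = "sum _"]) auto
  also have "\<dots> = (\<Sum>F\<in>Pow H. \<Sum>\<omega>\<in>{\<omega>\<in>Pow H. F \<subseteq> \<omega> \<and> bdry V F = C}. trace_parity_weight K \<omega> F)"
    using assms by (intro sum.swap_restrict) auto
  also have "\<dots> = (\<Sum>F\<in>Pow H. if bdry V F = C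
      then \<Sum>\<omega>\<in>{\<omega>\<in>Pow H. F \<subseteq> \<omega>}. trace_parity_weight K \<omega> F else 0)"
    by (intro sum.cong refl) simp
  also have "\<dots> = (\<Sum>F\<in>{F\<in>Pow H. bdry V F = C}. \<Sum>\<omega>\<in>{\<omega>\<in>Pow H. F \<subseteq> \<omega>}. trace_parity_weight K \<omega> F)"
    using assms by (intro sum.inter_filter[symmetric]) simp
  also have "\<dots> = current_partition V H K C"
    unfolding current_partition_def using assms
    by (intro sum.cong refl sum_trace_parity_weight_supersets) auto
  finally show ?thesis .
qed

lemma rc_prob_eq:
  fixes K :: "'v set \<Rightarrow> real"
  assumes "finite H" "\<And>e. e \<in> H \<Longrightarrow> K e \<ge> 0"
  shows "rc_prob V H K C \<omega> = (if \<omega> \<subseteq> H then trace_weight V K C \<omega> else 0) / current_partition V H K C"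
proof -
  define c where "c = (\<Prod>e\<in>H. exp (- K e))"
  have "c > 0" unfolding c_def by (intro prod_pos) auto
  have trace: "(poisson_weight H K has_sum (c * trace_weight V K C \<omega>')) {n\<in>currents V H C. {e. n e > 0} = \<omega>'}"
    if "\<omega>' \<subseteq> H" for \<omega>'
    unfolding c_def using assms that by (intro has_sum_poisson_weight_trace) auto
  have num: "(\<Sum>\<^sub>\<infinity>n\<in>{n\<in>currents V H C. {e. n e > 0} = \<omega>}. poisson_weight H K n)
      = c * (if \<omega> \<subseteq> H then trace_weight V K C \<omega> else 0)"
  proof (cases "\<omega> \<subseteq> H")
    case False
    then have "{n\<in>currents V H C. {e. n e > 0} = \<omega>} = {}"
      by (auto simp: currents_def)
    then show ?thesis
      using False by (simp only: infsum_empty) simp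
  qed (simp add: infsumI[OF trace])
  have "(poisson_weight H K has_sum (\<Sum>\<omega>'\<in>Pow H. c * trace_weight V K C \<omega>'))
      (\<Union>\<omega>'\<in>Pow H. {n\<in>currents V H C. {e. n e > 0} = \<omega>'})"
    using assms(1) trace by (intro sum_has_sum) auto
  moreover have "{e. n e > 0} \<subseteq> H" if "n \<in> currents V H C" for n
    using that by (auto simp: currents_def)
  then have "(\<Union>\<omega>'\<in>Pow H. {n\<in>currents V H C. {e. n e > 0} = \<omega>'}) = currents V H C"
    by blast
  ultimately have "(\<Sum>\<^sub>\<infinity>n\<in>currents V H C. poisson_weight H K n) = c * current_partition V H K C"
    using sum_trace_weight[OF assms(1)] by (simp add: infsumI sum_distrib_left[symmetric])
  then show ?thesis
    unfolding rc_prob_def num using \<open>c > 0\<close> by simp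
qed

lemma trace_weight_eq_0_if_partition_eq_0:
  assumes "finite H" "\<And>e. e \<in> H \<Longrightarrow> K e \<ge> 0" "current_partition V H K C = 0" "\<omega> \<subseteq> H"
  shows "trace_weight V K C \<omega> = 0"
proof -
  have "(\<Sum>\<omega>\<in>Pow H. trace_weight V K C \<omega>) = 0"
    using assms(1,3) by (simp add: sum_trace_weight)
  moreover have "\<forall>\<omega>\<in>Pow H. trace_weight V K C \<omega> \<ge> 0"
    using assms(2) by (auto intro: trace_weight_nonneg)
  ultimately show ?thesis
    using assms(1,4) sum_nonneg_eq_0_iff[of "Pow H" "trace_weight V K C"] by simp
qed

lemma rc_event_eq:
  fixes K :: "'v set \<Rightarrow> real"
  assumes "finite E" "H \<subseteq> E" "\<And>e. e \<in> H \<Longrightarrow> K e \<ge> 0"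
  shows "rc_event V E H K C X = (\<Sum>\<omega>\<in>Pow H \<inter> X. trace_weight V K C \<omega>) / current_partition V H K C"
proof -
  have fH: "finite H" using assms finite_subset by blast
  have "rc_event V E H K C X
      = (\<Sum>\<omega>\<in>Pow E \<inter> X. if \<omega> \<subseteq> H then trace_weight V K C \<omega> else 0) / current_partition V H K C"
    unfolding rc_event_def by (simp add: rc_prob_eq[OF fH assms(3)] sum_divide_distrib)
  also have "(\<Sum>\<omega>\<in>Pow E \<inter> X. if \<omega> \<subseteq> H then trace_weight V K C \<omega> else 0)
      = (\<Sum>\<omega>\<in>Pow H \<inter> X. trace_weight V K C \<omega>)"
    using assms(1,2) by (subst sum.inter_filter[symmetric]) (auto intro!: arg_cong[where f = "sum _"])
  finally show ?thesis .
qed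

lemma rc_cond_eq:
  fixes K :: "'v set \<Rightarrow> real"
  assumes "finite E" "H \<subseteq> E" "\<And>e. e \<in> H \<Longrightarrow> K e \<ge> 0"
  shows "rc_cond V E H K C X \<omega> = (if \<omega> \<in> X \<and> \<omega> \<subseteq> H then trace_weight V K C \<omega> else 0)
                                  / (\<Sum>\<omega>'\<in>Pow H \<inter> X. trace_weight V K C \<omega>')"
proof -
  have fH: "finite H" using assms finite_subset by blast
  show ?thesis
  proof (cases "current_partition V H K C = 0")
    case True
    then show ?thesis
      by (simp add: rc_cond_def rc_prob_eq[OF fH assms(3)] trace_weight_eq_0_if_partition_eq_0[OF fH assms(3)])
  next
    case False
    then show ?thesis
      by (simp add: rc_cond_def rc_event_eq[OF assms] rc_prob_eq[OF fH assms(3)])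
  qed
qed

text \<open>One edge of the union of two traces: x and y say whether it lies in the first and in
  the second trace, a and b whether it carries an odd current in the first and in the second.\<close>

lemma sum_edge_states:
  fixes k :: real
  defines "w c x \<equiv> if c then sinh k else if x then cosh k - 1 else 1"
  shows "(\<Sum>(x, y)\<in>{(x, y). (x \<or> y) \<and> (a \<longrightarrow> x) \<and> (b \<longrightarrow> y)}. w a x * w b y)
       = (if a \<noteq> b then sinh (2 * k) else cosh (2 * k) - 1) / 2"
proof -
  have "{(x, y). (x \<or> y) \<and> (a \<longrightarrow> x) \<and> (b \<longrightarrow> y)}
      = {(True, True)} \<union> (if a then {} else {(False, True)}) \<union> (if b then {} else {(True, False)})"
    by auto
  then show ?thesis
    unfolding w_def using cosh_square_eq[of k] sinh_double[of k] cosh_double[of k]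
    by (cases a; cases b) (simp_all add: algebra_simps power2_eq_square)
qed

lemma trace_parity_weight_as_prod:
  assumes "finite \<omega>" "F \<subseteq> X" "X \<subseteq> \<omega>"
  shows "trace_parity_weight K X F
       = (\<Prod>e\<in>\<omega>. if e \<in> F then sinh (K e) else if e \<in> X then cosh (K e) - 1 else 1)"
proof -
  have "(\<Prod>e\<in>\<omega>. if e \<in> F then sinh (K e) else if e \<in> X then cosh (K e) - 1 else 1)
      = (\<Prod>e\<in>X. if e \<in> F then sinh (K e) else cosh (K e) - 1)"
    using assms by (intro prod.mono_neutral_cong_right) auto
  also have "\<dots> = trace_parity_weight K X F"
    unfolding trace_parity_weight_def prod.If_cases[OF finite_subset[OF assms(3,1)]]
    using assms(2) by (simp add: Int_absorb1 Diff_eq)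
  finally show ?thesis ..
qed

lemma sum_trace_parity_weight_pairs:
  fixes K :: "'e \<Rightarrow> real"
  assumes "finite \<omega>" "F1 \<subseteq> \<omega>" "F2 \<subseteq> \<omega>"
  shows "(\<Sum>p\<in>{p\<in>Pow \<omega> \<times> Pow \<omega>. fst p \<union> snd p = \<omega> \<and> F1 \<subseteq> fst p \<and> F2 \<subseteq> snd p}.
           trace_parity_weight K (fst p) F1 * trace_parity_weight K (snd p) F2)
       = (1/2) ^ card \<omega> * trace_parity_weight (\<lambda>e. 2 * K e) \<omega> (symdiff F1 F2)"
    (is "sum _ ?P = _")
proof -
  define T where "T e = {(x, y). (x \<or> y) \<and> (e \<in> F1 \<longrightarrow> x) \<and> (e \<in> F2 \<longrightarrow> y)}" for e
  define w where "w F e x = (if e \<in> F then sinh (K e) else if x then cosh (K e) - 1 else 1)" for F e x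
  define pair where "pair t = ({e\<in>\<omega>. fst (t e)}, {e\<in>\<omega>. snd (t e)})" for t :: "'e \<Rightarrow> bool \<times> bool"
  have bij: "bij_betw pair (PiE \<omega> T) ?P"
  proof (rule bij_betwI[where g = "\<lambda>p. restrict (\<lambda>e. (e \<in> fst p, e \<in> snd p)) \<omega>"])
    show "pair \<in> PiE \<omega> T \<rightarrow> ?P"
      using assms(2,3) by (fastforce simp: pair_def T_def PiE_iff)
    show "(\<lambda>p. restrict (\<lambda>e. (e \<in> fst p, e \<in> snd p)) \<omega>) \<in> ?P \<rightarrow> PiE \<omega> T"
      by (auto simp: T_def)
    show "restrict (\<lambda>e. (e \<in> fst (pair t), e \<in> snd (pair t))) \<omega> = t" if "t \<in> PiE \<omega> T" for t
      using that by (auto simp: pair_def PiE_iff extensional_def fun_eq_iff)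
  qed (auto simp: pair_def)
  have "sum (\<lambda>p. trace_parity_weight K (fst p) F1 * trace_parity_weight K (snd p) F2) ?P
      = (\<Sum>t\<in>PiE \<omega> T. \<Prod>e\<in>\<omega>. w F1 e (fst (t e)) * w F2 e (snd (t e)))"
  proof (rule sum.reindex_bij_betw[OF bij, symmetric, THEN trans], rule sum.cong[OF refl])
    fix t assume "t \<in> PiE \<omega> T"
    then have "pair t \<in> ?P" using bij by (auto simp: bij_betw_def)
    then show "trace_parity_weight K (fst (pair t)) F1 * trace_parity_weight K (snd (pair t)) F2
        = (\<Prod>e\<in>\<omega>. w F1 e (fst (t e)) * w F2 e (snd (t e)))"
      unfolding prod.distrib using assms(1)
      by (simp add: trace_parity_weight_as_prod[of \<omega>] w_def pair_def cong: prod.cong_simp if_cong)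
  qed
  also have "\<dots> = (\<Prod>e\<in>\<omega>. \<Sum>(x, y)\<in>T e. w F1 e x * w F2 e y)"
    using assms(1) by (subst prod_sum_PiE) (auto simp: T_def case_prod_unfold)
  also have "\<dots> = (\<Prod>e\<in>\<omega>. (1/2) * (if e \<in> symdiff F1 F2 then sinh (2 * K e) else cosh (2 * K e) - 1))"
    unfolding T_def w_def by (intro prod.cong refl) (simp add: sum_edge_states symdiff_def)
  also have "\<dots> = (1/2) ^ card \<omega> * (\<Prod>e\<in>\<omega>. if e \<in> symdiff F1 F2 then sinh (2 * K e)
      else if e \<in> \<omega> then cosh (2 * K e) - 1 else 1)"
    unfolding prod.distrib prod_constant by (intro arg_cong[where f = "(*) _"] prod.cong) auto
  also have "\<dots> = (1/2) ^ card \<omega> * trace_parity_weight (\<lambda>e. 2 * K e) \<omega> (symdiff F1 F2)"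
    using assms by (subst trace_parity_weight_as_prod[of \<omega>]) (auto simp: symdiff_def)
  finally show ?thesis .
qed

lemma trace_weight_eq_sum_restrict:
  assumes "finite \<omega>" "X \<subseteq> \<omega>"
  shows "trace_weight V K C X
       = (\<Sum>F\<in>{F\<in>Pow \<omega>. bdry V F = C}. if F \<subseteq> X then trace_parity_weight K X F else 0)"
proof -
  have "{F\<in>Pow X. bdry V F = C} = {F\<in>{F\<in>Pow \<omega>. bdry V F = C}. F \<subseteq> X}"
    using assms(2) by auto
  then show ?thesis
    unfolding trace_weight_def using assms(1) by (simp only:) (intro sum.inter_filter, simp)
qed

lemma sum_trace_parity_weight_symdiff:
  assumes "finite \<omega>" "F1 \<subseteq> \<omega>" "bdry V F1 = A"
  shows "(\<Sum>F2\<in>{F\<in>Pow \<omega>. bdry V F = B}. trace_parity_weight K \<omega> (symdiff F1 F2))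
       = trace_weight V K (symdiff A B) \<omega>"
  unfolding trace_weight_def
  by (rule sum.reindex_bij_betw[OF bij_betw_symdiff_bdry[OF assms]])

lemma sum_union_trace_weights:
  fixes K :: "'v set \<Rightarrow> real"
  assumes "finite \<omega>"
  shows "(\<Sum>p\<in>{p\<in>Pow \<omega> \<times> Pow \<omega>. fst p \<union> snd p = \<omega>}.
           trace_weight V K A (fst p) * trace_weight V K B (snd p))
       = real (card {F\<in>Pow \<omega>. bdry V F = A}) * (1/2) ^ card \<omega>
           * trace_weight V (\<lambda>e. 2 * K e) (symdiff A B) \<omega>"
proof -
  let ?P = "{p\<in>Pow \<omega> \<times> Pow \<omega>. fst p \<union> snd p = \<omega>}"
  define S where "S C = {F\<in>Pow \<omega>. bdry V F = C}" for C
  define g where "g p F1 F2 = (if F1 \<subseteq> fst p \<and> F2 \<subseteq> snd p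
      then trace_parity_weight K (fst p) F1 * trace_parity_weight K (snd p) F2 else 0)" for p F1 F2
  have "(\<Sum>p\<in>?P. trace_weight V K A (fst p) * trace_weight V K B (snd p))
      = (\<Sum>p\<in>?P. \<Sum>F1\<in>S A. \<Sum>F2\<in>S B. g p F1 F2)"
  proof (intro sum.cong refl)
    fix p assume "p \<in> ?P"
    have "(if P then a else 0) * (if Q then b else 0) = (if P \<and> Q then a * b else (0::real))" for P Q a b
      by simp
    with \<open>p \<in> ?P\<close> show "trace_weight V K A (fst p) * trace_weight V K B (snd p)
        = (\<Sum>F1\<in>S A. \<Sum>F2\<in>S B. g p F1 F2)"
      unfolding S_def using assms
      by (auto simp: trace_weight_eq_sum_restrict[of \<omega>] sum_product g_def cong: if_cong)
  qed
  also have "\<dots> = (\<Sum>F1\<in>S A. \<Sum>F2\<in>S B. \<Sum>p\<in>?P. g p F1 F2)"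
    by (subst sum.swap) (intro sum.cong refl sum.swap)
  also have "\<dots> = (\<Sum>F1\<in>S A. \<Sum>F2\<in>S B.
      (1/2) ^ card \<omega> * trace_parity_weight (\<lambda>e. 2 * K e) \<omega> (symdiff F1 F2))"
  proof (intro sum.cong refl)
    fix F1 F2 assume "F1 \<in> S A" "F2 \<in> S B"
    then have "F1 \<subseteq> \<omega>" "F2 \<subseteq> \<omega>" by (auto simp: S_def)
    have "{p\<in>?P. F1 \<subseteq> fst p \<and> F2 \<subseteq> snd p}
        = {p\<in>Pow \<omega> \<times> Pow \<omega>. fst p \<union> snd p = \<omega> \<and> F1 \<subseteq> fst p \<and> F2 \<subseteq> snd p}"
      by auto
    then show "(\<Sum>p\<in>?P. g p F1 F2)
        = (1/2) ^ card \<omega> * trace_parity_weight (\<lambda>e. 2 * K e) \<omega> (symdiff F1 F2)"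
      unfolding g_def using sum_trace_parity_weight_pairs[OF assms \<open>F1 \<subseteq> \<omega>\<close> \<open>F2 \<subseteq> \<omega>\<close>] assms
      by (simp add: sum.inter_filter[symmetric])
  qed
  also have "\<dots> = (\<Sum>F1\<in>S A. (1/2) ^ card \<omega> * trace_weight V (\<lambda>e. 2 * K e) (symdiff A B) \<omega>)"
    unfolding S_def sum_distrib_left[symmetric] using assms
    by (intro sum.cong refl arg_cong[where f = "(*) _"] sum_trace_parity_weight_symdiff) auto
  finally show ?thesis
    by (simp add: S_def)
qed

section \<open>Spins, currents and clusters on a finite graph\<close>

locale finite_graph =
  fixes V :: "'v set" and E :: "'v set set"
  assumes finite_V: "finite V" and edges: "\<forall>e\<in>E. e \<subseteq> V \<and> card e = 2"
begin

lemma finite_E: "finite E"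
  using edges finite_V by (intro finite_subset[of E "Pow V"]) auto

lemma finite_subgraph: "\<omega> \<subseteq> E \<Longrightarrow> finite \<omega>"
  using finite_E finite_subset by blast

lemma edgeE:
  assumes "e \<in> E"
  obtains u v where "e = {u, v}" "u \<noteq> v" "u \<in> V" "v \<in> V"
  using edges assms by (auto simp: card_2_iff)

lemma agree_edges_subset: "agree_edges E \<sigma> \<subseteq> E"
  unfolding agree_edges_def by auto

lemma prod_edge_spins:
  assumes "e \<in> E" "\<sigma> \<in> spins V"
  shows "(\<Prod>x\<in>e. \<sigma> x) = (if e \<in> agree_edges E \<sigma> then 1 else -1)"
proof -
  obtain u v where e: "e = {u, v}" "u \<noteq> v" using assms(1) by (rule edgeE)
  then have "e \<in> agree_edges E \<sigma> \<longleftrightarrow> \<sigma> u = \<sigma> v"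
    using assms(1) by (auto simp: agree_edges_def doubleton_eq_iff)
  then show ?thesis
    using e spins_values[OF assms(2), of u] spins_values[OF assms(2), of v] by auto
qed

lemma prod_edges_eq_prod_bdry:
  assumes "F \<subseteq> E" "\<sigma> \<in> spins V"
  shows "(\<Prod>e\<in>F. \<Prod>x\<in>e. \<sigma> x) = (\<Prod>x\<in>bdry V F. \<sigma> x)"
proof -
  have "(\<Prod>e\<in>F. \<Prod>x\<in>e. \<sigma> x) = (\<Prod>e\<in>F. \<Prod>x\<in>{x\<in>V. x \<in> e}. \<sigma> x)"
    using assms(1) edges by (intro prod.cong refl arg_cong[where f = "prod _"]) auto
  also have "\<dots> = (\<Prod>x\<in>V. \<sigma> x ^ card {e\<in>F. x \<in> e})"
    using finite_subgraph[OF assms(1)] finite_V by (simp add: prod.swap_restrict)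
  also have "\<dots> = (\<Prod>x\<in>V. if odd (card {e\<in>F. x \<in> e}) then \<sigma> x else 1)"
  proof (intro prod.cong refl)
    fix x
    show "\<sigma> x ^ card {e\<in>F. x \<in> e} = (if odd (card {e\<in>F. x \<in> e}) then \<sigma> x else 1)"
      using spins_values[OF assms(2), of x] by (auto simp: power_minus')
  qed
  also have "\<dots> = (\<Prod>x\<in>bdry V F. \<sigma> x)"
    unfolding bdry_def using finite_V by (rule prod.inter_filter[symmetric])
  finally show ?thesis .
qed

lemma prod_one_plus_edge_spins:
  assumes "\<omega> \<subseteq> E" "\<sigma> \<in> spins V"
  shows "(\<Prod>e\<in>\<omega>. 1 + (\<Prod>x\<in>e. \<sigma> x)) = (if \<sigma> \<in> fmap V E \<omega> then 2 ^ card \<omega> else 0)"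
proof -
  have "(\<Prod>e\<in>\<omega>. 1 + (\<Prod>x\<in>e. \<sigma> x)) = (\<Prod>e\<in>\<omega>. if e \<in> agree_edges E \<sigma> then 2 else 0)"
    using assms by (intro prod.cong refl) (auto simp: prod_edge_spins)
  also have "\<dots> = (if \<omega> \<subseteq> agree_edges E \<sigma> then 2 ^ card \<omega> else 0)"
  proof (cases "\<omega> \<subseteq> agree_edges E \<sigma>")
    case False
    then show ?thesis
      using finite_subgraph[OF assms(1)] by (auto intro: prod_zero)
  next
    case True
    then have "(\<Prod>e\<in>\<omega>. if e \<in> agree_edges E \<sigma> then 2 else 0) = (\<Prod>e\<in>\<omega>. 2 :: real)"
      by (intro prod.cong) auto
    with True show ?thesis by simp
  qed
  finally show ?thesis
    using assms(2) by (simp add: fmap_def)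
qed

lemma card_even_subgraphs:
  assumes "\<omega> \<subseteq> E"
  shows "real (card (spins V)) * real (card {F\<in>Pow \<omega>. bdry V F = {}})
       = 2 ^ card \<omega> * real (card (fmap V E \<omega>))"
proof -
  have fin: "finite \<omega>" using finite_subgraph[OF assms] .
  have expand: "(\<Prod>e\<in>\<omega>. 1 + (\<Prod>x\<in>e. \<sigma> x)) = (\<Sum>F\<in>Pow \<omega>. \<Prod>x\<in>bdry V F. \<sigma> x)"
    if "\<sigma> \<in> spins V" for \<sigma>
    using prod_add[OF fin, of "\<lambda>e. \<Prod>x\<in>e. \<sigma> x" "\<lambda>_. 1"] assms that
    by (simp add: add.commute prod_edges_eq_prod_bdry)
  have "2 ^ card \<omega> * real (card (fmap V E \<omega>))
      = (\<Sum>\<sigma>\<in>spins V. if \<sigma> \<in> fmap V E \<omega> then 2 ^ card \<omega> else 0)"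
    using finite_spins[OF finite_V] by (simp add: sum.inter_filter[symmetric] fmap_def)
  also have "\<dots> = (\<Sum>\<sigma>\<in>spins V. \<Sum>F\<in>Pow \<omega>. \<Prod>x\<in>bdry V F. \<sigma> x)"
    using assms by (intro sum.cong refl) (simp only: prod_one_plus_edge_spins flip: expand)
  also have "\<dots> = (\<Sum>F\<in>Pow \<omega>. \<Sum>\<sigma>\<in>spins V. \<Prod>x\<in>bdry V F. \<sigma> x)"
    by (rule sum.swap)
  also have "\<dots> = (\<Sum>F\<in>Pow \<omega>. if bdry V F = {} then real (card (spins V)) else 0)"
    by (intro sum.cong refl sum_spins_prod finite_V bdry_subset)
  also have "\<dots> = real (card (spins V)) * real (card {F\<in>Pow \<omega>. bdry V F = {}})"
    using fin by (simp add: sum.inter_filter[symmetric])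
  finally show ?thesis ..
qed

lemma card_bdry_subgraphs:
  assumes "\<omega> \<subseteq> E"
  shows "card {F\<in>Pow \<omega>. bdry V F = A}
       = (if \<omega> \<in> FA V E A then card {F\<in>Pow \<omega>. bdry V F = {}} else 0)"
proof (cases "\<omega> \<in> FA V E A")
  case True
  then obtain F0 where "F0 \<subseteq> \<omega>" "bdry V F0 = A" unfolding FA_def by auto
  then have "bij_betw (symdiff F0) {F\<in>Pow \<omega>. bdry V F = {}} {F\<in>Pow \<omega>. bdry V F = symdiff A {}}"
    using finite_subgraph[OF assms] by (intro bij_betw_symdiff_bdry)
  then show ?thesis
    using True by (simp add: bij_betw_same_card symdiff_def)
next
  case False
  have "{F\<in>Pow \<omega>. bdry V F = A} = {}"
    using assms False by (auto simp: FA_def)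
  then show ?thesis
    using False by (simp only: card.empty if_False)
qed

lemma sum_union_trace_weights_eq:
  fixes K :: "'v set \<Rightarrow> real"
  assumes "\<omega> \<subseteq> E"
  shows "(\<Sum>p\<in>{p\<in>Pow E \<times> Pow E. fst p \<union> snd p = \<omega>}.
           trace_weight V K A (fst p) * trace_weight V K B (snd p))
       = (if \<omega> \<in> FA V E A then trace_weight V (\<lambda>e. 2 * K e) (symdiff A B) \<omega> else 0)
           * real (card (fmap V E \<omega>)) / real (card (spins V))"
proof -
  have pairs: "{p\<in>Pow E \<times> Pow E. fst p \<union> snd p = \<omega>} = {p\<in>Pow \<omega> \<times> Pow \<omega>. fst p \<union> snd p = \<omega>}"
    using assms by auto
  have "real (card {F\<in>Pow \<omega>. bdry V F = {}}) = 2 ^ card \<omega> * real (card (fmap V E \<omega>)) / real (card (spins V))"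
    using card_even_subgraphs[OF assms] card_spins_pos[OF finite_V] by (simp add: eq_divide_eq ac_simps)
  then have even: "real (card {F\<in>Pow \<omega>. bdry V F = {}}) * (1/2) ^ card \<omega>
      = real (card (fmap V E \<omega>)) / real (card (spins V))"
    by (simp add: power_one_over)
  show ?thesis
    unfolding pairs sum_union_trace_weights[OF finite_subgraph[OF assms]] card_bdry_subgraphs[OF assms, of A]
  proof (cases "\<omega> \<in> FA V E A")
    case True
    then show "real (if \<omega> \<in> FA V E A then card {F\<in>Pow \<omega>. bdry V F = {}} else 0) * (1/2) ^ card \<omega>
        * trace_weight V (\<lambda>e. 2 * K e) (symdiff A B) \<omega>
      = (if \<omega> \<in> FA V E A then trace_weight V (\<lambda>e. 2 * K e) (symdiff A B) \<omega> else 0)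
        * real (card (fmap V E \<omega>)) / real (card (spins V))"
      unfolding if_P[OF True] even by simp
  qed simp
qed

lemma ising_weight_expansion:
  assumes "H \<subseteq> E" "\<sigma> \<in> spins V"
  shows "ising_weight H K \<sigma>
       = (\<Sum>F\<in>Pow H. (\<Prod>e\<in>F. sinh (K e)) * (\<Prod>e\<in>H - F. cosh (K e)) * (\<Prod>x\<in>bdry V F. \<sigma> x))"
proof -
  have fin: "finite H" using finite_subgraph[OF assms(1)] .
  have "ising_weight H K \<sigma> = (\<Prod>e\<in>H. exp (K e * (\<Prod>x\<in>e. \<sigma> x)))"
    unfolding ising_weight_def by (rule exp_sum[OF fin])
  also have "\<dots> = (\<Prod>e\<in>H. (\<Prod>x\<in>e. \<sigma> x) * sinh (K e) + cosh (K e))"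
  proof (intro prod.cong refl)
    fix e assume "e \<in> H"
    then have "(\<Prod>x\<in>e. \<sigma> x) = 1 \<or> (\<Prod>x\<in>e. \<sigma> x) = -1"
      using assms by (simp add: prod_edge_spins subset_iff)
    then show "exp (K e * (\<Prod>x\<in>e. \<sigma> x)) = (\<Prod>x\<in>e. \<sigma> x) * sinh (K e) + cosh (K e)"
      using cosh_plus_sinh[of "K e"] cosh_minus_sinh[of "K e"] by auto
  qed
  also have "\<dots> = (\<Sum>F\<in>Pow H. (\<Prod>e\<in>F. (\<Prod>x\<in>e. \<sigma> x) * sinh (K e)) * (\<Prod>e\<in>H - F. cosh (K e)))"
    by (rule prod_add[OF fin])
  also have "\<dots> = (\<Sum>F\<in>Pow H. (\<Prod>e\<in>F. sinh (K e)) * (\<Prod>e\<in>H - F. cosh (K e)) * (\<Prod>x\<in>bdry V F. \<sigma> x))"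
    using assms by (intro sum.cong refl) (auto simp: prod.distrib prod_edges_eq_prod_bdry)
  finally show ?thesis .
qed

lemma sum_spins_prod_ising_weight:
  assumes "H \<subseteq> E" "C \<subseteq> V"
  shows "(\<Sum>\<sigma>\<in>spins V. (\<Prod>x\<in>C. \<sigma> x) * ising_weight H K \<sigma>)
       = real (card (spins V)) * current_partition V H K C"
proof -
  have fC: "finite C" using finite_subset[OF assms(2) finite_V] .
  have fB: "finite (bdry V F)" for F using finite_subset[OF bdry_subset finite_V] .
  define a where "a F = (\<Prod>e\<in>F. sinh (K e)) * (\<Prod>e\<in>H - F. cosh (K e))" for F
  have "(\<Sum>\<sigma>\<in>spins V. (\<Prod>x\<in>C. \<sigma> x) * ising_weight H K \<sigma>)
      = (\<Sum>\<sigma>\<in>spins V. \<Sum>F\<in>Pow H. a F * (\<Prod>x\<in>symdiff C (bdry V F). \<sigma> x))"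
  proof (rule sum.cong[OF refl])
    fix \<sigma> assume \<sigma>: "\<sigma> \<in> spins V"
    have "(\<Prod>x\<in>C. \<sigma> x) * ising_weight H K \<sigma>
        = (\<Sum>F\<in>Pow H. a F * ((\<Prod>x\<in>C. \<sigma> x) * (\<Prod>x\<in>bdry V F. \<sigma> x)))"
      unfolding ising_weight_expansion[OF assms(1) \<sigma>] a_def sum_distrib_left
      by (intro sum.cong refl) (simp only: ac_simps)
    then show "(\<Prod>x\<in>C. \<sigma> x) * ising_weight H K \<sigma>
        = (\<Sum>F\<in>Pow H. a F * (\<Prod>x\<in>symdiff C (bdry V F). \<sigma> x))"
      by (simp only: prod_spins_symdiff[OF \<sigma> fC fB])
  qed
  also have "\<dots> = (\<Sum>F\<in>Pow H. a F * (\<Sum>\<sigma>\<in>spins V. \<Prod>x\<in>symdiff C (bdry V F). \<sigma> x))"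
    unfolding sum_distrib_left by (rule sum.swap)
  also have "\<dots> = (\<Sum>F\<in>Pow H. if bdry V F = C then a F * real (card (spins V)) else 0)"
  proof (rule sum.cong[OF refl])
    fix F
    have "symdiff C (bdry V F) \<subseteq> V"
      using assms(2) bdry_subset[of V F] unfolding symdiff_def by blast
    then show "a F * (\<Sum>\<sigma>\<in>spins V. \<Prod>x\<in>symdiff C (bdry V F). \<sigma> x)
        = (if bdry V F = C then a F * real (card (spins V)) else 0)"
      by (auto simp: sum_spins_prod[OF finite_V] symdiff_eq_empty_iff)
  qed
  also have "\<dots> = real (card (spins V)) * current_partition V H K C"
    unfolding current_partition_def a_def sum_distrib_left using finite_subgraph[OF assms(1)]
    by (subst sum.inter_filter) (simp_all add: ac_simps cong: if_cong)
  finally show ?thesis .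
qed

lemma ising_corr_eq:
  assumes "H \<subseteq> E" "C \<subseteq> V"
  shows "ising_corr V H K C = real (card (spins V)) * current_partition V H K C / ising_Z V H K"
  unfolding ising_corr_def ising_mu_def
  by (simp add: sum_divide_distrib[symmetric] sum_spins_prod_ising_weight[OF assms])

lemma ising_weight_mult_product:
  assumes "\<tau> \<in> spins V" "\<sigma> \<in> spins V"
  shows "ising_weight E J \<tau> * ising_weight E J (\<lambda>v. \<tau> v * \<sigma> v)
       = ising_weight (agree_edges E \<sigma>) (\<lambda>e. 2 * J e) \<tau>"
proof -
  have "J e * (\<Prod>x\<in>e. \<tau> x) + J e * (\<Prod>x\<in>e. \<tau> x * \<sigma> x)
      = (if e \<in> agree_edges E \<sigma> then 2 * J e * (\<Prod>x\<in>e. \<tau> x) else 0)" if "e \<in> E" for e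
    using prod_edge_spins[OF that assms(2)] by (auto simp: prod.distrib)
  then have "(\<Sum>e\<in>E. J e * (\<Prod>x\<in>e. \<tau> x) + J e * (\<Prod>x\<in>e. \<tau> x * \<sigma> x))
      = (\<Sum>e\<in>agree_edges E \<sigma>. 2 * J e * (\<Prod>x\<in>e. \<tau> x))"
    using finite_E agree_edges_subset
    by (simp add: sum.If_cases Int_absorb1 cong: sum.cong)
  then show ?thesis
    unfolding ising_weight_def by (simp add: exp_add[symmetric] sum.distrib)
qed

lemma mu_xor_eq:
  assumes "\<sigma> \<in> spins V"
  shows "mu_xor V E J \<sigma> = ising_Z V (agree_edges E \<sigma>) (\<lambda>e. 2 * J e) / ising_Z V E J ^ 2"
proof -
  have "mu_xor V E J \<sigma> = (\<Sum>\<tau>\<in>spins V. ising_mu V E J \<tau> * ising_mu V E J (\<lambda>v. \<tau> v * \<sigma> v))"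
    unfolding mu_xor_def
    by (simp add: sum.reindex_bij_betw[OF bij_betw_spins_product[OF assms], symmetric])
  also have "\<dots> = (\<Sum>\<tau>\<in>spins V. ising_weight (agree_edges E \<sigma>) (\<lambda>e. 2 * J e) \<tau> / ising_Z V E J ^ 2)"
    using assms
    by (intro sum.cong refl) (simp add: ising_mu_def power2_eq_square ising_weight_mult_product[symmetric])
  finally show ?thesis
    unfolding ising_Z_def by (simp add: sum_divide_distrib)
qed

lemma fmap_const_on_conn:
  assumes "\<sigma> \<in> fmap V E \<omega>" "(u, v) \<in> conn V \<omega>"
  shows "\<sigma> u = \<sigma> v"
proof -
  have "(u, v) \<in> {(u, v). {u, v} \<in> \<omega>}\<^sup>*"
    using assms(2) unfolding conn_def by simp
  then show ?thesis
  proof (induction rule: rtrancl_induct)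
    case (step y z)
    then have "{y, z} \<in> agree_edges E \<sigma>" using assms(1) unfolding fmap_def by auto
    then have "\<sigma> y = \<sigma> z" unfolding agree_edges_def by (auto simp: doubleton_eq_iff)
    with step show ?case by simp
  qed simp
qed

lemma conn_class_self: "v \<in> V \<Longrightarrow> v \<in> conn V \<omega> `` {v}"
  unfolding conn_def by auto

lemma conn_class_edge:
  assumes "{u, v} \<in> \<omega>" "u \<in> V" "v \<in> V"
  shows "conn V \<omega> `` {u} = conn V \<omega> `` {v}"
proof -
  have "(u, v) \<in> {(u, v). {u, v} \<in> \<omega>}\<^sup>*" "(v, u) \<in> {(u, v). {u, v} \<in> \<omega>}\<^sup>*"
    using assms by (auto simp: insert_commute)
  then show ?thesis
    unfolding conn_def using assms by (auto intro: rtrancl_trans)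
qed

lemma conn_class_in_clusters: "v \<in> V \<Longrightarrow> conn V \<omega> `` {v} \<in> clusters V \<omega>"
  unfolding clusters_def by (rule quotientI)

lemma finite_clusters: "finite (clusters V \<omega>)"
  unfolding clusters_def quotient_def using finite_V by auto

lemma spread_in_fmap:
  assumes "\<omega> \<subseteq> E" "s \<in> clusters V \<omega> \<rightarrow>\<^sub>E {-1, 1}"
  shows "spread V \<omega> s \<in> fmap V E \<omega>"
proof -
  have "s (conn V \<omega> `` {v}) \<in> {-1, 1}" if "v \<in> V" for v
    using assms(2) conn_class_in_clusters[OF that] by blast
  then have "spread V \<omega> s \<in> spins V"
    unfolding spins_def spread_def by auto
  moreover have "e \<in> agree_edges E (spread V \<omega> s)" if "e \<in> \<omega>" for e
  proof -
    have "e \<in> E" using assms(1) that by blast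
    then obtain u v where "e = {u, v}" "u \<noteq> v" "u \<in> V" "v \<in> V" by (rule edgeE)
    moreover have "spread V \<omega> s u = spread V \<omega> s v"
      using conn_class_edge[of u v \<omega>] that \<open>e = {u, v}\<close> \<open>u \<in> V\<close> \<open>v \<in> V\<close>
      by (simp add: spread_def)
    ultimately show ?thesis
      unfolding agree_edges_def using \<open>e \<in> E\<close> by blast
  qed
  ultimately show ?thesis
    unfolding fmap_def by auto
qed

lemma inj_on_spread: "inj_on (spread V \<omega>) (clusters V \<omega> \<rightarrow>\<^sub>E {-1, 1})"
proof (rule inj_onI)
  fix s s' assume s: "s \<in> clusters V \<omega> \<rightarrow>\<^sub>E {-1, 1}" and s': "s' \<in> clusters V \<omega> \<rightarrow>\<^sub>E {-1, 1}"
    and eq: "spread V \<omega> s = spread V \<omega> s'"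
  show "s = s'"
  proof (rule PiE_ext[OF s s'])
    fix c assume "c \<in> clusters V \<omega>"
    then obtain v where "v \<in> V" "c = conn V \<omega> `` {v}"
      unfolding clusters_def by (auto elim: quotientE)
    then show "s c = s' c"
      using fun_cong[OF eq, of v] unfolding spread_def by simp
  qed
qed

lemma fmap_subset_spread_image: "fmap V E \<omega> \<subseteq> spread V \<omega> ` (clusters V \<omega> \<rightarrow>\<^sub>E {-1, 1})"
proof
  fix \<sigma> assume \<sigma>: "\<sigma> \<in> fmap V E \<omega>"
  then have "\<sigma> \<in> spins V" unfolding fmap_def by simp
  define s where "s = restrict (\<lambda>c. \<sigma> (SOME v. v \<in> c)) (clusters V \<omega>)"
  have "(v, SOME w. w \<in> conn V \<omega> `` {v}) \<in> conn V \<omega>" if "v \<in> V" for v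
    using someI[of "\<lambda>w. w \<in> conn V \<omega> `` {v}" v] conn_class_self[OF that] by simp
  then have "\<sigma> (SOME w. w \<in> conn V \<omega> `` {v}) = \<sigma> v" if "v \<in> V" for v
    using fmap_const_on_conn[OF \<sigma>] that by metis
  then have "spread V \<omega> s = \<sigma>"
    using \<open>\<sigma> \<in> spins V\<close> conn_class_in_clusters
    unfolding spread_def s_def spins_def by (auto simp: fun_eq_iff)
  moreover have "s \<in> clusters V \<omega> \<rightarrow>\<^sub>E {-1, 1}"
    using spins_values[OF \<open>\<sigma> \<in> spins V\<close>] unfolding s_def by auto
  ultimately show "\<sigma> \<in> spread V \<omega> ` (clusters V \<omega> \<rightarrow>\<^sub>E {-1, 1})"
    by blast
qed

lemma bij_betw_spread_fmap:
  assumes "\<omega> \<subseteq> E"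
  shows "bij_betw (spread V \<omega>) (clusters V \<omega> \<rightarrow>\<^sub>E {-1, 1}) (fmap V E \<omega>)"
  using inj_on_spread fmap_subset_spread_image spread_in_fmap[OF assms]
  by (intro bij_betw_imageI) blast+

lemma card_fmap:
  assumes "\<omega> \<subseteq> E"
  shows "card (fmap V E \<omega>) = 2 ^ kappa V \<omega>"
  using bij_betw_same_card[OF bij_betw_spread_fmap[OF assms]] finite_clusters
  by (simp add: kappa_def card_PiE numeral_2_eq_2)

lemma card_fmap_pos:
  assumes "\<omega> \<subseteq> E"
  shows "card (fmap V E \<omega>) > 0"
  using card_fmap[OF assms] by simp

lemma cluster_sign_law_eq:
  assumes "\<omega> \<subseteq> E"
  shows "cluster_sign_law V \<omega> \<sigma> = (if \<sigma> \<in> fmap V E \<omega> then 1 else 0) / real (card (fmap V E \<omega>))"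
proof -
  note bij = bij_betw_spread_fmap[OF assms]
  have "card {s \<in> clusters V \<omega> \<rightarrow>\<^sub>E {-1, 1}. spread V \<omega> s = \<sigma>} = (if \<sigma> \<in> fmap V E \<omega> then 1 else 0)"
  proof (cases "\<sigma> \<in> fmap V E \<omega>")
    case True
    then have "\<sigma> \<in> spread V \<omega> ` (clusters V \<omega> \<rightarrow>\<^sub>E {-1, 1})"
      using bij by (simp add: bij_betw_def)
    then obtain s0 where "s0 \<in> clusters V \<omega> \<rightarrow>\<^sub>E {-1, 1}" "spread V \<omega> s0 = \<sigma>"
      by (rule imageE) simp
    moreover have "s = s0" if "s \<in> clusters V \<omega> \<rightarrow>\<^sub>E {-1, 1}" "spread V \<omega> s = \<sigma>" for s
      using inj_onD[OF bij_betw_imp_inj_on[OF bij]] that \<open>s0 \<in> _\<close> \<open>spread V \<omega> s0 = \<sigma>\<close> by simp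
    ultimately have "{s \<in> clusters V \<omega> \<rightarrow>\<^sub>E {-1, 1}. spread V \<omega> s = \<sigma>} = {s0}"
      by blast
    with True show ?thesis by simp
  next
    case False
    then have "{s \<in> clusters V \<omega> \<rightarrow>\<^sub>E {-1, 1}. spread V \<omega> s = \<sigma>} = {}"
      using spread_in_fmap[OF assms] by blast
    then show ?thesis
      using False by (simp only: card.empty if_False)
  qed
  then show ?thesis
    unfolding cluster_sign_law_def bij_betw_same_card[OF bij] by simp
qed

lemma sum_spins_fmap_indicator:
  "(\<Sum>\<sigma>\<in>spins V. if \<sigma> \<in> fmap V E \<omega> then c else 0) = c * real (card (fmap V E \<omega>))"
proof -
  have "spins V \<inter> fmap V E \<omega> = fmap V E \<omega>"
    by (auto simp: fmap_def)
  then show ?thesis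
    using sum.inter_restrict[OF finite_spins[OF finite_V], of "\<lambda>_. c" "fmap V E \<omega>"]
    by (simp add: mult.commute)
qed

end

section \<open>The coupling\<close>

locale coupling_setup = finite_graph +
  fixes J :: "'v set \<Rightarrow> real" and A B :: "'v set"
  assumes J_pos: "\<forall>e\<in>E. J e > 0" and A_subset: "A \<subseteq> V" and B_subset: "B \<subseteq> V"
begin

abbreviation J2 :: "'v set \<Rightarrow> real" where
  "J2 \<equiv> \<lambda>e. 2 * J e"

definition rho_weight :: "'v set set \<Rightarrow> real" where
  "rho_weight \<omega> = (if \<omega> \<in> FA V E A then trace_weight V J2 (symdiff A B) \<omega> else 0)"

definition mu_weight :: "('v \<Rightarrow> real) \<Rightarrow> real" where
  "mu_weight \<sigma> = (\<Sum>\<omega>\<in>Pow E. if \<sigma> \<in> fmap V E \<omega> then rho_weight \<omega> else 0)"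

definition coupling_mass :: real where
  "coupling_mass = (\<Sum>\<omega>\<in>Pow E. rho_weight \<omega> * real (card (fmap V E \<omega>)))"

lemma J_nonneg: "e \<in> E \<Longrightarrow> J e \<ge> 0"
  using J_pos by (auto intro: less_imp_le)

lemma rc_event_J2:
  "H \<subseteq> E \<Longrightarrow> rc_event V E H J2 C X
     = (\<Sum>\<omega>\<in>Pow H \<inter> X. trace_weight V J2 C \<omega>) / current_partition V H J2 C"
  by (intro rc_event_eq finite_E) (auto intro: J_nonneg)

lemma rc_cond_J2:
  "H \<subseteq> E \<Longrightarrow> rc_cond V E H J2 C X \<omega>
     = (if \<omega> \<in> X \<and> \<omega> \<subseteq> H then trace_weight V J2 C \<omega> else 0)
       / (\<Sum>\<omega>'\<in>Pow H \<inter> X. trace_weight V J2 C \<omega>')"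
  by (intro rc_cond_eq finite_E) (auto intro: J_nonneg)

lemma rho_weight_nonneg: "\<omega> \<subseteq> E \<Longrightarrow> rho_weight \<omega> \<ge> 0"
  unfolding rho_weight_def using J_nonneg by (auto intro!: trace_weight_nonneg)

lemma rho_weight_pos:
  assumes "\<omega> \<in> FA V E A" "\<omega> \<in> FA V E B"
  shows "rho_weight \<omega> > 0"
proof -
  obtain F1 F2 where F: "F1 \<subseteq> \<omega>" "bdry V F1 = A" "F2 \<subseteq> \<omega>" "bdry V F2 = B" "\<omega> \<subseteq> E"
    using assms unfolding FA_def by auto
  have fin: "finite \<omega>" using finite_subgraph[OF \<open>\<omega> \<subseteq> E\<close>] .
  have J: "J e > 0" if "e \<in> \<omega>" for e using J_pos F(5) that by auto
  have "bdry V (symdiff F1 F2) = symdiff A B"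
    using bdry_symdiff[OF finite_subset[OF F(1) fin] finite_subset[OF F(3) fin]] F(2,4) by simp
  moreover have "symdiff F1 F2 \<subseteq> \<omega>"
    using F(1,3) by (auto simp: symdiff_def)
  ultimately have F12: "symdiff F1 F2 \<in> {F\<in>Pow \<omega>. bdry V F = symdiff A B}"
    by simp
  have "cosh (J2 e) - 1 > 0" if "e \<in> \<omega>" for e
    using J[OF that] by (simp add: less_le cosh_real_ge_1)
  then have "trace_parity_weight J2 \<omega> (symdiff F1 F2) > 0"
    unfolding trace_parity_weight_def using F12 J by (intro mult_pos_pos prod_pos) auto
  also have "\<dots> \<le> trace_weight V J2 (symdiff A B) \<omega>"
    unfolding trace_weight_def using fin F12 J
    by (intro member_le_sum trace_parity_weight_nonneg) (auto intro: less_imp_le)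
  finally show ?thesis
    unfolding rho_weight_def using assms(1) by simp
qed

lemma sum_rho_weight:
  "(\<Sum>\<omega>\<in>Pow E. rho_weight \<omega>) = (\<Sum>\<omega>\<in>Pow E \<inter> FA V E A. trace_weight V J2 (symdiff A B) \<omega>)"
  unfolding rho_weight_def using finite_E by (simp add: sum.inter_restrict)

lemma mu_weight_eq:
  assumes "\<sigma> \<in> spins V"
  shows "mu_weight \<sigma> = (\<Sum>\<omega>\<in>Pow (agree_edges E \<sigma>) \<inter> FA V E A. trace_weight V J2 (symdiff A B) \<omega>)"
proof -
  have "mu_weight \<sigma> = (\<Sum>\<omega>\<in>Pow E. if \<omega> \<in> Pow (agree_edges E \<sigma>) \<inter> FA V E A
      then trace_weight V J2 (symdiff A B) \<omega> else 0)"
    unfolding mu_weight_def rho_weight_def using assms by (intro sum.cong refl) (auto simp: fmap_def)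
  also have "\<dots> = (\<Sum>\<omega>\<in>Pow E \<inter> (Pow (agree_edges E \<sigma>) \<inter> FA V E A). trace_weight V J2 (symdiff A B) \<omega>)"
    using finite_E by (simp add: sum.inter_restrict)
  also have "Pow E \<inter> (Pow (agree_edges E \<sigma>) \<inter> FA V E A) = Pow (agree_edges E \<sigma>) \<inter> FA V E A"
    using agree_edges_subset by blast
  finally show ?thesis .
qed

lemma rho_eq:
  assumes "\<omega> \<subseteq> E"
  shows "rho V E J A B \<omega> = rho_weight \<omega> / (\<Sum>\<omega>'\<in>Pow E. rho_weight \<omega>')"
proof -
  have cond: "rc_cond V E E J2 (symdiff A B) (FA V E A) \<omega>' = rho_weight \<omega>' / (\<Sum>\<omega>'\<in>Pow E. rho_weight \<omega>')"
    if "\<omega>' \<subseteq> E" for \<omega>'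
    using that unfolding sum_rho_weight
    by (simp add: rc_cond_J2 rho_weight_def)
  then have "(\<Sum>\<omega>'\<in>Pow E. rc_cond V E E J2 (symdiff A B) (FA V E A) \<omega>')
      = (\<Sum>\<omega>'\<in>Pow E. rho_weight \<omega>') / (\<Sum>\<omega>'\<in>Pow E. rho_weight \<omega>')"
    unfolding sum_divide_distrib by (intro sum.cong) auto
  then show ?thesis
    unfolding rho_def cond[OF assms] by (cases "(\<Sum>\<omega>'\<in>Pow E. rho_weight \<omega>') = 0") simp_all
qed

lemma coupling_eq:
  assumes "\<omega> \<subseteq> E"
  shows "coupling V E J A B \<omega> \<sigma> = (if \<sigma> \<in> fmap V E \<omega> then rho_weight \<omega> else 0) / coupling_mass"
proof -
  define S where "S = (\<Sum>\<omega>\<in>Pow E. rho_weight \<omega>)"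
  define c where "c = 1 / real (card (spins V)) / S"
  have weight: "coupling_weight V E J A B \<omega>' \<sigma>' = c * (if \<sigma>' \<in> fmap V E \<omega>' then rho_weight \<omega>' else 0)"
    if "\<omega>' \<subseteq> E" for \<omega>' \<sigma>'
    unfolding coupling_weight_def gamma_unif_def c_def rho_eq[OF that] S_def by simp
  have "(\<Sum>p\<in>Pow E \<times> spins V. coupling_weight V E J A B (fst p) (snd p))
      = (\<Sum>\<omega>'\<in>Pow E. \<Sum>\<sigma>'\<in>spins V. coupling_weight V E J A B \<omega>' \<sigma>')"
    by (simp add: sum.cartesian_product case_prod_unfold)
  also have "\<dots> = c * coupling_mass"
    unfolding coupling_mass_def sum_distrib_left
    by (intro sum.cong refl) (simp add: weight sum_distrib_left[symmetric] sum_spins_fmap_indicator)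
  finally have total: "(\<Sum>p\<in>Pow E \<times> spins V. coupling_weight V E J A B (fst p) (snd p)) = c * coupling_mass" .
  show ?thesis
  proof (cases "S = 0")
    case True
    then have "rho_weight \<omega> = 0"
      unfolding S_def using sum_nonneg_eq_0_iff[of "Pow E" rho_weight] finite_E rho_weight_nonneg assms
      by auto
    then show ?thesis
      unfolding coupling_def weight[OF assms] by simp
  next
    case False
    then have "c \<noteq> 0"
      unfolding c_def using card_spins_pos[OF finite_V] by simp
    then show ?thesis
      unfolding coupling_def weight[OF assms] total by simp
  qed
qed

lemma sum_spins_coupling:
  "\<omega> \<subseteq> E \<Longrightarrow> (\<Sum>\<sigma>\<in>spins V. coupling V E J A B \<omega> \<sigma>) = rho_weight \<omega> * real (card (fmap V E \<omega>)) / coupling_mass"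
  by (simp add: coupling_eq sum_divide_distrib[symmetric] sum_spins_fmap_indicator)

lemma sum_configs_coupling:
  "(\<Sum>\<omega>\<in>Pow E. coupling V E J A B \<omega> \<sigma>) = mu_weight \<sigma> / coupling_mass"
  unfolding mu_weight_def sum_divide_distrib by (intro sum.cong refl) (simp add: coupling_eq)

lemma sum_mu_weight: "(\<Sum>\<sigma>\<in>spins V. mu_weight \<sigma>) = coupling_mass"
  unfolding mu_weight_def coupling_mass_def
  by (subst sum.swap) (simp add: sum_spins_fmap_indicator)

lemma symdiff_subset: "symdiff A B \<subseteq> V"
  using A_subset B_subset by (auto simp: symdiff_def)

lemma muAB_weight_eq:
  assumes "\<sigma> \<in> spins V"
  shows "muAB_weight V E J A B \<sigma> = real (card (spins V)) / ising_Z V E J ^ 2 * mu_weight \<sigma>"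
proof -
  let ?S = "agree_edges E \<sigma>"
  define Q where "Q = current_partition V ?S J2 (symdiff A B)"
  define Z where "Z = ising_Z V ?S J2"
  have "Z > 0" unfolding Z_def by (rule ising_Z_pos[OF finite_V])
  have weight: "muAB_weight V E J A B \<sigma>
      = (real (card (spins V)) * Q / Z) * (mu_weight \<sigma> / Q) * (Z / ising_Z V E J ^ 2)"
    unfolding muAB_weight_def Q_def Z_def
      ising_corr_eq[OF agree_edges_subset symdiff_subset]
      rc_event_J2[OF agree_edges_subset]
      mu_weight_eq[OF assms] mu_xor_eq[OF assms] ..
  show ?thesis
  proof (cases "Q = 0")
    case True
    have "trace_weight V J2 (symdiff A B) \<omega> = 0" if "\<omega> \<subseteq> ?S" for \<omega>
      by (rule trace_weight_eq_0_if_partition_eq_0[OF finite_subgraph[OF agree_edges_subset] _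
            True[unfolded Q_def] that])
         (use agree_edges_subset J_nonneg in auto)
    then have "mu_weight \<sigma> = 0"
      unfolding mu_weight_eq[OF assms] by (intro sum.neutral) auto
    then show ?thesis
      unfolding weight by simp
  next
    case False
    then show ?thesis
      unfolding weight using \<open>Z > 0\<close> by simp
  qed
qed

lemma muAB_eq:
  assumes "\<sigma> \<in> spins V"
  shows "muAB V E J A B \<sigma> = mu_weight \<sigma> / coupling_mass"
proof -
  define k where "k = real (card (spins V)) / ising_Z V E J ^ 2"
  have "k > 0"
    unfolding k_def using card_spins_pos[OF finite_V] ising_Z_pos[OF finite_V, of E J] by simp
  have "(\<Sum>\<sigma>'\<in>spins V. muAB_weight V E J A B \<sigma>') = k * coupling_mass"
    unfolding k_def sum_mu_weight[symmetric] sum_distrib_left by (intro sum.cong refl muAB_weight_eq)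
  then show ?thesis
    unfolding muAB_def muAB_weight_eq[OF assms, folded k_def] using \<open>k > 0\<close> by simp
qed

lemma rc_cond_agree_edges_eq:
  assumes "\<sigma> \<in> spins V" "\<omega> \<subseteq> E"
  shows "rc_cond V E (agree_edges E \<sigma>) J2 (symdiff A B) (FA V E A) \<omega>
       = (if \<sigma> \<in> fmap V E \<omega> then rho_weight \<omega> else 0) / mu_weight \<sigma>"
  unfolding rc_cond_J2[OF agree_edges_subset]
    mu_weight_eq[OF assms(1)]
  using assms by (auto simp: rho_weight_def fmap_def)

lemma drc_prob_eq:
  assumes "\<omega> \<subseteq> E"
  shows "drc_prob V E J A B \<omega> = rho_weight \<omega> * real (card (fmap V E \<omega>)) / coupling_mass"
proof -
  define N where "N = real (card (spins V))"
  have "N > 0" unfolding N_def using card_spins_pos[OF finite_V] by simp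
  have rc: "rc_prob V E J C X = trace_weight V J C X / current_partition V E J C" if "X \<subseteq> E" for C X
    using that by (simp add: rc_prob_eq[OF finite_E J_nonneg])
  have union: "(\<Sum>p\<in>{p\<in>Pow E \<times> Pow E. fst p \<union> snd p = \<omega>'}.
      trace_weight V J A (fst p) * trace_weight V J B (snd p)) = rho_weight \<omega>' * real (card (fmap V E \<omega>')) / N"
    if "\<omega>' \<subseteq> E" for \<omega>'
    unfolding sum_union_trace_weights_eq[OF that] rho_weight_def N_def by simp
  have "drc_prob V E J A B \<omega> = (\<Sum>p\<in>{p\<in>Pow E \<times> Pow E. fst p \<union> snd p = \<omega>}.
      trace_weight V J A (fst p) * trace_weight V J B (snd p))
      / (current_partition V E J A * current_partition V E J B)"
    unfolding drc_prob_def sum_divide_distrib by (intro sum.cong refl) (auto simp: rc)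
  also have "current_partition V E J A * current_partition V E J B
      = (\<Sum>p\<in>Pow E \<times> Pow E. trace_weight V J A (fst p) * trace_weight V J B (snd p))"
    unfolding sum_trace_weight[OF finite_E, symmetric] sum_product sum.cartesian_product
    by (simp add: case_prod_unfold)
  also have "\<dots> = (\<Sum>\<omega>'\<in>Pow E. \<Sum>p\<in>{p\<in>Pow E \<times> Pow E. fst p \<union> snd p = \<omega>'}.
      trace_weight V J A (fst p) * trace_weight V J B (snd p))"
    using finite_E by (intro sum.group[symmetric]) auto
  also have "\<dots> = coupling_mass / N"
    unfolding coupling_mass_def sum_divide_distrib by (intro sum.cong refl) (simp add: union)
  finally show ?thesis
    unfolding union[OF assms] using \<open>N > 0\<close> by simp
qed

lemma coupling_marginal_spins:
  "\<sigma> \<in> spins V \<Longrightarrow> (\<Sum>\<omega>\<in>Pow E. coupling V E J A B \<omega> \<sigma>) = muAB V E J A B \<sigma>"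
  by (simp add: sum_configs_coupling muAB_eq)

lemma coupling_marginal_configs:
  "\<omega> \<subseteq> E \<Longrightarrow> (\<Sum>\<sigma>\<in>spins V. coupling V E J A B \<omega> \<sigma>) = drc_prob V E J A B \<omega>"
  by (simp add: sum_spins_coupling drc_prob_eq)

lemma coupling_cond_config:
  assumes "\<omega> \<in> FA V E A \<inter> FA V E B" "\<sigma> \<in> spins V"
  shows "coupling V E J A B \<omega> \<sigma> / (\<Sum>\<sigma>'\<in>spins V. coupling V E J A B \<omega> \<sigma>') = cluster_sign_law V \<omega> \<sigma>"
proof -
  have "\<omega> \<subseteq> E" using assms(1) by (auto simp: FA_def)
  have rho: "rho_weight \<omega> > 0" using assms(1) rho_weight_pos by simp
  have card: "real (card (fmap V E \<omega>)) > 0" using card_fmap_pos[OF \<open>\<omega> \<subseteq> E\<close>] by simp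
  have "0 < rho_weight \<omega> * real (card (fmap V E \<omega>))" using rho card by simp
  also have "\<dots> \<le> coupling_mass"
    unfolding coupling_mass_def using \<open>\<omega> \<subseteq> E\<close> finite_E
    by (intro member_le_sum mult_nonneg_nonneg rho_weight_nonneg) auto
  finally show ?thesis
    using rho card unfolding sum_spins_coupling[OF \<open>\<omega> \<subseteq> E\<close>]
    unfolding coupling_eq[OF \<open>\<omega> \<subseteq> E\<close>] cluster_sign_law_eq[OF \<open>\<omega> \<subseteq> E\<close>]
    by (simp add: field_simps)
qed

lemma coupling_cond_spins:
  assumes "\<sigma> \<in> spins V" "muAB V E J A B \<sigma> \<noteq> 0" "\<omega> \<subseteq> E"
  shows "coupling V E J A B \<omega> \<sigma> / (\<Sum>\<omega>'\<in>Pow E. coupling V E J A B \<omega>' \<sigma>)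
       = rc_cond V E (agree_edges E \<sigma>) J2 (symdiff A B) (FA V E A) \<omega>"
  using assms(2)
  unfolding sum_configs_coupling coupling_eq[OF assms(3)] rc_cond_agree_edges_eq[OF assms(1,3)]
    muAB_eq[OF assms(1)]
  by simp

end

theorem proposition2p1:
  fixes V :: "'v set" and E :: "'v set set" and J :: "'v set \<Rightarrow> real" and A B :: "'v set"
  assumes "finite V"
    and "\<forall>e\<in>E. e \<subseteq> V \<and> card e = 2"
    and "\<forall>e\<in>E. J e > 0"
    and "A \<subseteq> V" and "B \<subseteq> V" and "even (card A)" and "even (card B)"
  shows "(\<forall>\<omega>\<in>Pow E. card (fmap V E \<omega>) = 2 ^ kappa V \<omega>)
    \<and> (\<forall>\<sigma>\<in>spins V. (\<Sum>\<omega>\<in>Pow E. coupling V E J A B \<omega> \<sigma>) = muAB V E J A B \<sigma>)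
    \<and> (\<forall>\<omega>\<in>FA V E A \<inter> FA V E B. \<forall>\<sigma>\<in>spins V.
          coupling V E J A B \<omega> \<sigma> / (\<Sum>\<sigma>'\<in>spins V. coupling V E J A B \<omega> \<sigma>')
          = cluster_sign_law V \<omega> \<sigma>)
    \<and> (\<forall>\<omega>\<in>Pow E. (\<Sum>\<sigma>\<in>spins V. coupling V E J A B \<omega> \<sigma>) = drc_prob V E J A B \<omega>)
    \<and> (\<forall>\<sigma>\<in>spins V. muAB V E J A B \<sigma> \<noteq> 0 \<longrightarrow> (\<forall>\<omega>\<in>Pow E.
          coupling V E J A B \<omega> \<sigma> / (\<Sum>\<omega>'\<in>Pow E. coupling V E J A B \<omega>' \<sigma>)
          = rc_cond V E (agree_edges E \<sigma>) (\<lambda>e. 2 * J e) (symdiff A B) (FA V E A) \<omega>))"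
proof -
  interpret coupling_setup V E J A B
    using assms by unfold_locales auto
  show ?thesis
    using card_fmap coupling_marginal_spins coupling_cond_config coupling_marginal_configs
      coupling_cond_spins
    by auto
qed

end
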